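(* Let $p$ be a prime and let $A_p$ be a non-zero $p$-primary Abelian group. Then $\mathrm{End}\,A_p$ is centrally essential if and only if $A_p\cong Z_{p^k}$ for some positive integer $k$ or $A_p\cong Z_{p^\infty}$.
   Context: All rings are associative with non-zero identity. A ring $R$ is centrally essential if for every non-zero $a\in R$ there exist non-zero elements $x,y$ of the center of $R$ with $ax=y$. $Z_{p^k}$ is the cyclic group of order $p^k$ and $Z_{p^\infty}$ is the quasi-cyclic (Prüfer) $p$-group. *)

theory Defs
  imports "HOL-Algebra.Algebra" Complex_Main
begin

definition ring_center :: "('a, 'm) ring_scheme \<Rightarrow> 'a set" where
  "ring_center R = {z \<in> carrier R. \<forall>r \<in> carrier R. z \<otimes>\<^bsub>R\<^esub> r = r \<otimes>\<^bsub>R\<^esub> z}"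

definition centrally_essential :: "('a, 'm) ring_scheme \<Rightarrow> bool" where
  "centrally_essential R \<longleftrightarrow>
     (\<forall>a \<in> carrier R. a \<noteq> \<zero>\<^bsub>R\<^esub> \<longrightarrow>
        (\<exists>x \<in> ring_center R. \<exists>y \<in> ring_center R.
            x \<noteq> \<zero>\<^bsub>R\<^esub> \<and> y \<noteq> \<zero>\<^bsub>R\<^esub> \<and> a \<otimes>\<^bsub>R\<^esub> x = y))"

definition End_ring :: "('a, 'm) monoid_scheme \<Rightarrow> ('a \<Rightarrow> 'a) ring" where
  "End_ring G =
     \<lparr>carrier = {f. f \<in> hom G G \<and> f \<in> extensional (carrier G)},
      monoid.mult = (\<lambda>f g. compose (carrier G) f g),
      one = (\<lambda>x\<in>carrier G. x),
      ring.zero = (\<lambda>x\<in>carrier G. \<one>\<^bsub>G\<^esub>),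
      ring.add = (\<lambda>f g. \<lambda>x\<in>carrier G. f x \<otimes>\<^bsub>G\<^esub> g x)\<rparr>"

text \<open>The quasi-cyclic (Pruefer) p-group, modelled as the multiplicative group of
  complex roots of unity of p-power order.\<close>
definition pruefer_group :: "nat \<Rightarrow> complex monoid" where
  "pruefer_group p = \<lparr>carrier = {z. \<exists>n::nat. z ^ (p ^ n) = 1}, monoid.mult = (*), one = 1\<rparr>"

end

theory Submission
  imports Defs
begin

section \<open>Centrally essential rings\<close>

context ring
begin

lemma centrally_essential_if_commutative:
  assumes "\<And>a b. a \<in> carrier R \<Longrightarrow> b \<in> carrier R \<Longrightarrow> a \<otimes> b = b \<otimes> a"
  shows "centrally_essential R"
  unfolding centrally_essential_def
proof (intro ballI impI)
  fix a assume a: "a \<in> carrier R" "a \<noteq> \<zero>"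
  then have "\<one> \<noteq> \<zero>" using one_zeroD by blast
  moreover have "ring_center R = carrier R" using assms by (auto simp: ring_center_def)
  ultimately show "\<exists>x\<in>ring_center R. \<exists>y\<in>ring_center R. x \<noteq> \<zero> \<and> y \<noteq> \<zero> \<and> a \<otimes> x = y"
    using a by (intro bexI[of _ \<one>] bexI[of _ a]) auto
qed

lemma centrally_essential_idempotent_annihilated:
  assumes CE: "centrally_essential R" and e: "e \<in> carrier R" and a: "a \<in> carrier R"
    and ea: "(e \<otimes> a = a \<and> a \<otimes> e = \<zero>) \<or> (a \<otimes> e = a \<and> e \<otimes> a = \<zero>)"
  shows "a = \<zero>"
proof (rule ccontr)
  assume "a \<noteq> \<zero>"
  then obtain x y where x: "x \<in> ring_center R" and y: "y \<in> ring_center R" "y \<noteq> \<zero>" "a \<otimes> x = y"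
    using CE a unfolding centrally_essential_def by blast
  have xC: "x \<in> carrier R" and xe: "x \<otimes> e = e \<otimes> x" using x e by (auto simp: ring_center_def)
  have "(e \<otimes> a) \<otimes> x = e \<otimes> y" using y(3) e a xC by (simp add: m_assoc)
  also have "\<dots> = y \<otimes> e" using y(1) e by (simp add: ring_center_def)
  also have "\<dots> = (a \<otimes> e) \<otimes> x" using e a xC by (simp add: m_assoc xe flip: y(3))
  finally have "(e \<otimes> a) \<otimes> x = (a \<otimes> e) \<otimes> x" .
  then have "y = \<zero> \<otimes> x" using ea y(3) by auto
  then show False using xC y(2) by simp
qed

lemma centrally_essential_idempotent_central:
  assumes CE: "centrally_essential R" and e: "e \<in> carrier R" "e \<otimes> e = e" and r: "r \<in> carrier R"
  shows "e \<otimes> r = r \<otimes> e"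
proof -
  define a b where "a = e \<otimes> r \<ominus> e \<otimes> r \<otimes> e" and "b = r \<otimes> e \<ominus> e \<otimes> r \<otimes> e"
  have ee: "e \<otimes> (e \<otimes> s) = e \<otimes> s" if "s \<in> carrier R" for s
    using e that by (simp add: m_assoc[symmetric])
  have "e \<otimes> a = (e \<otimes> e) \<otimes> r \<ominus> (e \<otimes> e) \<otimes> r \<otimes> e" using e(1) r unfolding a_def by algebra
  moreover have "a \<otimes> e = e \<otimes> r \<otimes> e \<ominus> e \<otimes> r \<otimes> (e \<otimes> e)" using e(1) r unfolding a_def by algebra
  moreover have "e \<otimes> r \<otimes> e \<ominus> e \<otimes> r \<otimes> e = \<zero>" using e(1) r by algebra
  ultimately have "a = \<zero>"
    using e r by (intro centrally_essential_idempotent_annihilated[OF CE e(1)]) (simp_all add: a_def ee)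
  have "b \<otimes> e = r \<otimes> (e \<otimes> e) \<ominus> e \<otimes> r \<otimes> (e \<otimes> e)" using e(1) r unfolding b_def by algebra
  moreover have "e \<otimes> b = e \<otimes> r \<otimes> e \<ominus> (e \<otimes> e) \<otimes> r \<otimes> e" using e(1) r unfolding b_def by algebra
  moreover have "e \<otimes> r \<otimes> e \<ominus> e \<otimes> r \<otimes> e = \<zero>" using e(1) r by algebra
  ultimately have "b = \<zero>"
    using e r by (intro centrally_essential_idempotent_annihilated[OF CE e(1)]) (simp_all add: b_def ee)
  have "e \<otimes> r = a \<oplus> e \<otimes> r \<otimes> e" and "r \<otimes> e = b \<oplus> e \<otimes> r \<otimes> e"
    using e(1) r unfolding a_def b_def by algebra+
  then show ?thesis using \<open>a = \<zero>\<close> \<open>b = \<zero>\<close> e r by simp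
qed

end

section \<open>The endomorphism ring\<close>

context comm_group
begin

lemma End_ring_carrier:
  "f \<in> carrier (End_ring G) \<longleftrightarrow> f \<in> hom G G \<and> f \<in> extensional (carrier G)"
  by (simp add: End_ring_def)

lemma restrict_in_End_ring: "f \<in> hom G G \<Longrightarrow> restrict f (carrier G) \<in> carrier (End_ring G)"
  by (simp add: End_ring_carrier hom_def Pi_iff)

lemma End_ring_add: "f \<oplus>\<^bsub>End_ring G\<^esub> g = (\<lambda>x\<in>carrier G. f x \<otimes> g x)"
  and End_ring_mult: "f \<otimes>\<^bsub>End_ring G\<^esub> g = compose (carrier G) f g"
  and End_ring_zero: "\<zero>\<^bsub>End_ring G\<^esub> = (\<lambda>x\<in>carrier G. \<one>)"
  and End_ring_one: "\<one>\<^bsub>End_ring G\<^esub> = (\<lambda>x\<in>carrier G. x)"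
  by (simp_all add: End_ring_def)

lemma ring_End_ring: "ring (End_ring G)"
proof (rule ringI)
  let ?E = "carrier (End_ring G)"
  have closed: "f x \<in> carrier G" if "f \<in> ?E" "x \<in> carrier G" for f x
    using that by (auto simp: End_ring_carrier hom_def)
  have restrict_self: "restrict f (carrier G) = f" if "f \<in> ?E" for f
    using that by (simp add: End_ring_carrier extensional_restrict)
  show "abelian_group (End_ring G)"
  proof (rule abelian_groupI)
    show "f \<oplus>\<^bsub>End_ring G\<^esub> g \<in> ?E" if "f \<in> ?E" "g \<in> ?E" for f g
      using that by (auto simp: End_ring_carrier End_ring_add hom_def Pi_iff m_ac)
    show "\<zero>\<^bsub>End_ring G\<^esub> \<in> ?E"
      by (simp add: End_ring_carrier End_ring_zero hom_def)
    show "f \<oplus>\<^bsub>End_ring G\<^esub> g \<oplus>\<^bsub>End_ring G\<^esub> h = f \<oplus>\<^bsub>End_ring G\<^esub> (g \<oplus>\<^bsub>End_ring G\<^esub> h)"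
      if "f \<in> ?E" "g \<in> ?E" "h \<in> ?E" for f g h
      unfolding End_ring_add using that by (intro restrict_ext) (simp add: closed m_assoc)
    show "f \<oplus>\<^bsub>End_ring G\<^esub> g = g \<oplus>\<^bsub>End_ring G\<^esub> f" if "f \<in> ?E" "g \<in> ?E" for f g
      unfolding End_ring_add using that by (intro restrict_ext) (simp add: closed m_comm)
    show "\<zero>\<^bsub>End_ring G\<^esub> \<oplus>\<^bsub>End_ring G\<^esub> f = f" if "f \<in> ?E" for f
    proof -
      have "\<zero>\<^bsub>End_ring G\<^esub> \<oplus>\<^bsub>End_ring G\<^esub> f = restrict f (carrier G)"
        unfolding End_ring_add End_ring_zero using that by (intro restrict_ext) (simp add: closed)
      then show ?thesis using restrict_self[OF that] by simp
    qed
    show "\<exists>g\<in>?E. g \<oplus>\<^bsub>End_ring G\<^esub> f = \<zero>\<^bsub>End_ring G\<^esub>" if "f \<in> ?E" for f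
    proof
      show "(\<lambda>x\<in>carrier G. inv f x) \<in> ?E"
        using that by (auto simp: End_ring_carrier hom_def Pi_iff inv_mult)
      show "(\<lambda>x\<in>carrier G. inv f x) \<oplus>\<^bsub>End_ring G\<^esub> f = \<zero>\<^bsub>End_ring G\<^esub>"
        unfolding End_ring_add End_ring_zero using that by (intro restrict_ext) (simp add: closed)
    qed
  qed
  show "monoid (End_ring G)"
  proof (rule monoidI)
    show "f \<otimes>\<^bsub>End_ring G\<^esub> g \<in> ?E" if "f \<in> ?E" "g \<in> ?E" for f g
    proof -
      have "f \<circ> g \<in> hom G G" using that by (intro Group.hom_compose) (auto simp: End_ring_carrier)
      then show ?thesis
        by (auto simp: End_ring_carrier End_ring_mult compose_def intro: hom_restrict)
    qed
    show "\<one>\<^bsub>End_ring G\<^esub> \<in> ?E"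
      by (simp add: End_ring_carrier End_ring_one hom_def)
    show "f \<otimes>\<^bsub>End_ring G\<^esub> g \<otimes>\<^bsub>End_ring G\<^esub> h = f \<otimes>\<^bsub>End_ring G\<^esub> (g \<otimes>\<^bsub>End_ring G\<^esub> h)"
      if "f \<in> ?E" "g \<in> ?E" "h \<in> ?E" for f g h
      unfolding End_ring_mult using that closed by (intro compose_assoc[symmetric] funcsetI) auto
    show "\<one>\<^bsub>End_ring G\<^esub> \<otimes>\<^bsub>End_ring G\<^esub> f = f" if "f \<in> ?E" for f
    proof -
      have "\<one>\<^bsub>End_ring G\<^esub> \<otimes>\<^bsub>End_ring G\<^esub> f = restrict f (carrier G)"
        unfolding End_ring_mult End_ring_one compose_def using that by (intro restrict_ext) (simp add: closed)
      then show ?thesis using restrict_self[OF that] by simp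
    qed
    show "f \<otimes>\<^bsub>End_ring G\<^esub> \<one>\<^bsub>End_ring G\<^esub> = f" if "f \<in> ?E" for f
    proof -
      have "f \<otimes>\<^bsub>End_ring G\<^esub> \<one>\<^bsub>End_ring G\<^esub> = restrict f (carrier G)"
        unfolding End_ring_mult End_ring_one compose_def by (intro restrict_ext) simp
      then show ?thesis using restrict_self[OF that] by simp
    qed
  qed
  show "(f \<oplus>\<^bsub>End_ring G\<^esub> g) \<otimes>\<^bsub>End_ring G\<^esub> h
      = f \<otimes>\<^bsub>End_ring G\<^esub> h \<oplus>\<^bsub>End_ring G\<^esub> g \<otimes>\<^bsub>End_ring G\<^esub> h"
    if "f \<in> ?E" "g \<in> ?E" "h \<in> ?E" for f g h
    unfolding End_ring_add End_ring_mult compose_def using that by (intro restrict_ext) (simp add: closed)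
  show "h \<otimes>\<^bsub>End_ring G\<^esub> (f \<oplus>\<^bsub>End_ring G\<^esub> g)
      = h \<otimes>\<^bsub>End_ring G\<^esub> f \<oplus>\<^bsub>End_ring G\<^esub> h \<otimes>\<^bsub>End_ring G\<^esub> g"
    if "f \<in> ?E" "g \<in> ?E" "h \<in> ?E" for f g h
    unfolding End_ring_add End_ring_mult compose_def using that
    by (intro restrict_ext) (simp add: closed hom_mult End_ring_carrier)
qed

lemma End_ring_idempotent_commute:
  assumes CE: "centrally_essential (End_ring G)"
    and e: "e \<in> hom G G" "\<And>x. x \<in> carrier G \<Longrightarrow> e (e x) = e x"
    and r: "r \<in> hom G G" and x: "x \<in> carrier G"
  shows "e (r x) = r (e x)"
proof -
  interpret E: ring "End_ring G" by (rule ring_End_ring)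
  let ?e = "restrict e (carrier G)" and ?r = "restrict r (carrier G)"
  have "?e \<otimes>\<^bsub>End_ring G\<^esub> ?e = ?e"
    unfolding End_ring_mult compose_def using e by (intro restrict_ext) (simp add: hom_in_carrier)
  then have "?e \<otimes>\<^bsub>End_ring G\<^esub> ?r = ?r \<otimes>\<^bsub>End_ring G\<^esub> ?e"
    using E.centrally_essential_idempotent_central[OF CE] restrict_in_End_ring e r by blast
  from fun_cong[OF this, of x] show ?thesis
    using x e r by (simp add: End_ring_mult compose_def hom_in_carrier)
qed

lemma End_ring_centrally_essential_if_commute:
  assumes "\<And>f g x. f \<in> hom G G \<Longrightarrow> g \<in> hom G G \<Longrightarrow> x \<in> carrier G \<Longrightarrow> f (g x) = g (f x)"
  shows "centrally_essential (End_ring G)"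
proof (rule ring.centrally_essential_if_commutative[OF ring_End_ring])
  fix f g assume "f \<in> carrier (End_ring G)" "g \<in> carrier (End_ring G)"
  then show "f \<otimes>\<^bsub>End_ring G\<^esub> g = g \<otimes>\<^bsub>End_ring G\<^esub> f"
    unfolding End_ring_mult compose_def using assms by (intro restrict_ext) (auto simp: End_ring_carrier)
qed

end

section \<open>Cyclic subgroups and chains of \<open>p\<close>-th roots\<close>

context group
begin

definition cyc :: "'a \<Rightarrow> 'a set" where
  "cyc x = range (\<lambda>i::int. x [^] i)"

lemma int_pow_mem_cyc [simp]: "x [^] (i::int) \<in> cyc x"
  by (simp add: cyc_def)

lemma nat_pow_mem_cyc [simp]: "x [^] (n::nat) \<in> cyc x"
  using int_pow_mem_cyc[of x "int n"] by (simp add: int_pow_int)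

lemma mem_cycE:
  assumes "y \<in> cyc x"
  obtains i where "y = x [^] (i::int)"
  using assms by (auto simp: cyc_def)

lemma subgroup_cyc:
  assumes "x \<in> carrier G" shows "subgroup (cyc x) G"
proof (rule subgroupI)
  show "cyc x \<subseteq> carrier G" "cyc x \<noteq> {}" using assms by (auto simp: cyc_def)
  show "inv y \<in> cyc x" if "y \<in> cyc x" for y
    using that assms by (auto simp: cyc_def simp flip: int_pow_neg)
  show "y \<otimes> z \<in> cyc x" if "y \<in> cyc x" "z \<in> cyc x" for y z
    using that assms by (auto simp: cyc_def simp flip: int_pow_mult)
qed

lemma cyc_subset: "y \<in> cyc x \<Longrightarrow> x \<in> carrier G \<Longrightarrow> cyc y \<subseteq> cyc x"
  by (auto simp: cyc_def int_pow_pow)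

lemma one_mem_cyc: "\<one> \<in> cyc x"
  using int_pow_mem_cyc[of x 0] by simp

lemma mem_cyc_self: "x \<in> carrier G \<Longrightarrow> x \<in> cyc x"
  using int_pow_mem_cyc[of x 1] by simp

lemma cyc_torsion_mem_cyc_pow:
  assumes x: "x \<in> carrier G" "ord x = k * l" "l > 0" and y: "y \<in> cyc x" "y [^] l = \<one>"
  shows "y \<in> cyc (x [^] k)"
proof -
  obtain i where i: "y = x [^] (i::int)" using y(1) by (rule mem_cycE)
  have "x [^] (i * int l) = \<one>" using y(2) x by (simp add: i int_pow_pow flip: int_pow_int)
  then have "int k * int l dvd i * int l" using x by (simp add: int_pow_eq_id)
  then have "int k dvd i" using x(3) by simp
  then obtain t where "i = int k * t" by (auto elim: dvdE)
  then have "y = (x [^] k) [^] t" using x by (simp add: i int_pow_pow flip: int_pow_int)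
  then show ?thesis by simp
qed

lemma cyc_generator_of_prime_order:
  assumes a: "a \<in> carrier G" "Factorial_Ring.prime (ord a)" and u: "u \<in> cyc a" "u \<noteq> \<one>"
  shows "a \<in> cyc u"
proof -
  obtain i where i: "u = a [^] (i::int)" using u(1) by (rule mem_cycE)
  have "\<not> int (ord a) dvd i" using u(2) a by (simp add: i int_pow_eq_id)
  then have "coprime (int (ord a)) i" using a(2) by (simp add: prime_imp_coprime_int)
  then obtain s t where "s * i + t * int (ord a) = 1"
    by (metis bezout_int coprime_iff_gcd_eq_1 gcd.commute)
  then have "a = a [^] (i * s + int (ord a) * t)" using a by (simp add: algebra_simps)
  also have "\<dots> = u [^] s" using a by (simp add: i int_pow_mult int_pow_pow int_pow_eq_id)
  finally show ?thesis by simp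
qed

lemma int_pow_in_subgroup_iff:
  assumes H: "subgroup H G" and x: "x \<in> carrier G" "x [^] n = \<one>" "n > 0"
  obtains m where "m dvd n" "\<And>i::int. x [^] i \<in> H \<longleftrightarrow> int m dvd i"
proof -
  define S where "S = {m::nat. m > 0 \<and> x [^] m \<in> H}"
  have "n \<in> S" using x H by (simp add: S_def subgroup.one_closed)
  define m where "m = (LEAST m. m \<in> S)"
  have mS: "m \<in> S" using \<open>n \<in> S\<close> unfolding m_def by (rule LeastI)
  then have m0: "m > 0" and xm: "x [^] m \<in> H" by (auto simp: S_def)
  have pow_in_H: "x [^] (int m * t) \<in> H" for t
  proof -
    have "x [^] (int m * t) = (x [^] m) [^] t" using x by (simp add: int_pow_pow flip: int_pow_int)
    then show ?thesis using xm H by (simp add: subgroup_int_pow_closed)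
  qed
  have key: "x [^] i \<in> H \<longleftrightarrow> int m dvd i" for i :: int
  proof
    assume xi: "x [^] i \<in> H"
    have "x [^] i = x [^] (int m * (i div int m)) \<otimes> x [^] (i mod int m)"
      using x by (simp add: int_pow_mult[symmetric])
    then have "x [^] (i mod int m) = inv (x [^] (int m * (i div int m))) \<otimes> x [^] i"
      using x by (simp add: inv_solve_left)
    then have "x [^] nat (i mod int m) \<in> H"
      using H xi pow_in_H m0 by (simp add: subgroup.m_closed subgroup.m_inv_closed flip: int_pow_int)
    moreover have "nat (i mod int m) < m" using m0 by (simp add: nat_less_iff)
    ultimately have "nat (i mod int m) \<notin> S"
      using not_less_Least unfolding m_def by blast
    then have "i mod int m = 0" using \<open>x [^] nat (i mod int m) \<in> H\<close> m0 by (auto simp: S_def)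
    then show "int m dvd i" by (simp add: dvd_eq_mod_eq_0)
  next
    assume "int m dvd i"
    then show "x [^] i \<in> H" using pow_in_H by (auto elim: dvdE)
  qed
  have "int m dvd int n" using key[of "int n"] \<open>n \<in> S\<close> by (simp add: S_def int_pow_int)
  then show ?thesis using that key by simp
qed

lemma hom_through_cyc:
  assumes e: "e \<in> hom G G" "e ` carrier G \<subseteq> cyc b" and b: "b \<in> carrier G"
    and c: "c \<in> carrier G" "ord c dvd ord b"
  obtains g where "g \<in> hom G G" "\<And>x i. x \<in> carrier G \<Longrightarrow> e x = b [^] (i::int) \<Longrightarrow> g x = c [^] i"
proof -
  define g where "g x = c [^] (SOME i::int. e x = b [^] i)" for x
  have g: "g x = c [^] i" if "e x = b [^] (i::int)" for x i
  proof -
    define j where "j = (SOME i::int. e x = b [^] i)"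
    have "e x = b [^] j" unfolding j_def using that by (rule someI)
    then have "int (ord b) dvd j - i" using that b by (simp add: int_pow_eq)
    then have "int (ord c) dvd j - i" using c(2) by (meson dvd_trans of_nat_dvd_iff)
    then show ?thesis using c(1) by (simp add: g_def j_def[symmetric] int_pow_eq dvd_diff_commute)
  qed
  have "g \<in> hom G G"
  proof (rule homI)
    show "g x \<in> carrier G" for x using c(1) by (simp add: g_def)
    fix x y assume xy: "x \<in> carrier G" "y \<in> carrier G"
    obtain i j where "e x = b [^] (i::int)" "e y = b [^] (j::int)"
      using xy e(2) by (blast elim: mem_cycE)
    moreover from this have "e (x \<otimes> y) = b [^] (i + j)"
      using xy e(1) b by (simp add: hom_mult int_pow_mult)
    ultimately show "g (x \<otimes> y) = g x \<otimes> g y" using g c(1) by (simp add: int_pow_mult)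
  qed
  then show ?thesis using that g by blast
qed

lemma iso_integer_mod_group:
  assumes g: "g \<in> carrier G" "carrier G \<subseteq> cyc g" and n: "ord g = n" "n > 0"
  shows "G \<cong> integer_mod_group n"
proof -
  define \<phi> where "\<phi> i = g [^] (i::int)" for i
  have carrier_Z: "carrier (integer_mod_group n) = {0..<int n}"
    using n(2) by (simp add: carrier_integer_mod_group)
  have \<phi>_mod: "\<phi> (i mod int n) = \<phi> i" for i
    unfolding \<phi>_def using g(1) n(1) by (simp add: int_pow_eq mod_eq_dvd_iff)
  have "\<phi> \<in> hom (integer_mod_group n) G"
  proof (rule homI)
    show "\<phi> i \<in> carrier G" for i using g(1) by (simp add: \<phi>_def)
    show "\<phi> (i \<otimes>\<^bsub>integer_mod_group n\<^esub> j) = \<phi> i \<otimes> \<phi> j" for i j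
      using \<phi>_mod[of "i + j"] g(1) by (simp add: \<phi>_def int_pow_mult)
  qed
  moreover have "bij_betw \<phi> (carrier (integer_mod_group n)) (carrier G)"
  proof (rule bij_betw_imageI)
    show "inj_on \<phi> (carrier (integer_mod_group n))"
    proof (rule inj_onI)
      fix i j assume ij: "i \<in> carrier (integer_mod_group n)" "j \<in> carrier (integer_mod_group n)"
        and "\<phi> i = \<phi> j"
      then have "int n dvd j - i" using g(1) n(1) by (simp add: \<phi>_def int_pow_eq)
      show "i = j"
      proof (rule ccontr)
        assume "i \<noteq> j"
        then have "\<bar>int n\<bar> \<le> \<bar>j - i\<bar>" using dvd_imp_le_int[OF _ \<open>int n dvd j - i\<close>] by simp
        then show False using ij carrier_Z by auto
      qed
    qed
    show "\<phi> ` carrier (integer_mod_group n) = carrier G"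
    proof
      show "\<phi> ` carrier (integer_mod_group n) \<subseteq> carrier G" using g(1) by (auto simp: \<phi>_def)
      show "carrier G \<subseteq> \<phi> ` carrier (integer_mod_group n)"
      proof
        fix x assume "x \<in> carrier G"
        then obtain i where "x = \<phi> i" using g(2) by (auto simp: \<phi>_def elim: mem_cycE)
        then have "x = \<phi> (i mod int n)" by (simp add: \<phi>_mod)
        then show "x \<in> \<phi> ` carrier (integer_mod_group n)" using carrier_Z n(2) by auto
      qed
    qed
  qed
  ultimately have "integer_mod_group n \<cong> G" by (auto intro: is_isoI isoI)
  then show ?thesis by (rule group.iso_sym[OF group_integer_mod_group])
qed

lemma root_chain:
  assumes "x0 \<in> carrier G" "\<And>x. x \<in> carrier G \<Longrightarrow> \<exists>y\<in>carrier G. y [^] (q::nat) = x"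
  obtains c where "c 0 = x0" "\<And>n. c n \<in> carrier G" "\<And>n. c (Suc n) [^] q = c n"
proof -
  define c where "c = rec_nat x0 (\<lambda>_ x. SOME y. y \<in> carrier G \<and> y [^] q = x)"
  have c_Suc: "c (Suc n) = (SOME y. y \<in> carrier G \<and> y [^] q = c n)" for n
    by (simp add: c_def)
  have "c n \<in> carrier G \<and> c (Suc n) \<in> carrier G \<and> c (Suc n) [^] q = c n" for n
  proof (induction n)
    case 0
    then show ?case
      using someI_ex[OF assms(2)[OF assms(1), unfolded Bex_def]] by (simp add: c_def assms(1))
  next
    case (Suc n)
    then show ?case using someI_ex[OF assms(2)[of "c (Suc n)", unfolded Bex_def]] c_Suc by simp
  qed
  then show ?thesis using that[of c] by (simp add: c_def)
qed

lemma root_chain_pow: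
  assumes "\<And>n. c n \<in> carrier G" "\<And>n. c (Suc n) [^] (q::nat) = c n"
  shows "c n = c (n + k) [^] (q ^ k)"
proof (induction k)
  case (Suc k)
  have "c (n + k) = c (n + Suc k) [^] q" using assms(2)[of "n + k"] by simp
  then show ?case using Suc assms(1) by (simp add: nat_pow_pow mult.commute)
qed (use assms(1) in simp)

lemma root_chain_int_pow_lift:
  assumes "\<And>n. c n \<in> carrier G" "\<And>n. c (Suc n) [^] (q::nat) = c n"
  shows "c n [^] (i::int) = c (n + m) [^] (int (q ^ m) * i)"
proof -
  have "c n = c (n + m) [^] int (q ^ m)" unfolding int_pow_int by (rule root_chain_pow[of c q n m, OF assms])
  then show ?thesis using assms(1) by (simp add: int_pow_pow)
qed

lemma root_chain_int_pow_eq: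
  assumes c: "\<And>n. c n \<in> carrier G" "\<And>n. c (Suc n) [^] (q::nat) = c n"
    "\<And>n. ord (c n) = q ^ Suc n"
  shows "c n [^] (i::int) = c m [^] (j::int) \<longleftrightarrow>
    int (q ^ Suc (n + m)) dvd int (q ^ n) * j - int (q ^ m) * i"
proof -
  have "c n [^] i = c (n + m) [^] (int (q ^ m) * i)" by (rule root_chain_int_pow_lift[of c q n i m, OF c(1,2)])
  moreover have "c m [^] j = c (n + m) [^] (int (q ^ n) * j)"
    using root_chain_int_pow_lift[of c q m j n, OF c(1,2)] by (simp add: add.commute)
  ultimately show ?thesis using c(1,3) by (simp add: int_pow_eq)
qed

end

lemma root_chain_iso:
  assumes G: "group G" and H: "group H"
    and c: "\<And>n. c n \<in> carrier G" "\<And>n. c (Suc n) [^]\<^bsub>G\<^esub> (q::nat) = c n"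
      "\<And>n. group.ord G (c n) = q ^ Suc n" "carrier G \<subseteq> (\<Union>n. group.cyc G (c n))"
    and d: "\<And>n. d n \<in> carrier H" "\<And>n. d (Suc n) [^]\<^bsub>H\<^esub> q = d n"
      "\<And>n. group.ord H (d n) = q ^ Suc n" "carrier H \<subseteq> (\<Union>n. group.cyc H (d n))"
  shows "G \<cong> H"
proof -
  interpret G: group G by (rule G)
  interpret H: group H by (rule H)
  have same: "c n [^]\<^bsub>G\<^esub> i = c m [^]\<^bsub>G\<^esub> j \<longleftrightarrow> d n [^]\<^bsub>H\<^esub> i = d m [^]\<^bsub>H\<^esub> j"
    for n m and i j :: int
    using G.root_chain_int_pow_eq[of c q, OF c(1-3)] H.root_chain_int_pow_eq[of d q, OF d(1-3)] by simp
  define \<Phi> where "\<Phi> x = (let (n, i) = (SOME (n, i). x = c n [^]\<^bsub>G\<^esub> (i::int)) in d n [^]\<^bsub>H\<^esub> i)"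
    for x
  have \<Phi>: "\<Phi> (c n [^]\<^bsub>G\<^esub> i) = d n [^]\<^bsub>H\<^esub> i" for n and i :: int
  proof -
    obtain m j where "(SOME (n', i'). c n [^]\<^bsub>G\<^esub> i = c n' [^]\<^bsub>G\<^esub> (i'::int)) = (m, j)"
      by fastforce
    moreover have "c n [^]\<^bsub>G\<^esub> i = c m [^]\<^bsub>G\<^esub> j"
      using someI[of "\<lambda>(n', i'). c n [^]\<^bsub>G\<^esub> i = c n' [^]\<^bsub>G\<^esub> (i'::int)" "(n, i)"] calculation
      by simp
    ultimately show ?thesis using same by (simp add: \<Phi>_def)
  qed
  have c_cover: "\<exists>n i. x = c n [^]\<^bsub>G\<^esub> (i::int)" if "x \<in> carrier G" for x
    using that c(4) by (auto elim: G.mem_cycE)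
  have hom: "\<Phi> \<in> hom G H"
  proof (rule homI)
    show "\<Phi> x \<in> carrier H" if x: "x \<in> carrier G" for x
    proof -
      obtain n i where "x = c n [^]\<^bsub>G\<^esub> (i::int)" using c_cover[OF x] by blast
      then show ?thesis using \<Phi> d(1) by simp
    qed
    show "\<Phi> (x \<otimes>\<^bsub>G\<^esub> y) = \<Phi> x \<otimes>\<^bsub>H\<^esub> \<Phi> y" if "x \<in> carrier G" "y \<in> carrier G" for x y
    proof -
      obtain n i m j where xy: "x = c n [^]\<^bsub>G\<^esub> (i::int)" "y = c m [^]\<^bsub>G\<^esub> (j::int)"
        using c_cover \<open>x \<in> carrier G\<close> \<open>y \<in> carrier G\<close> by meson
      have "x \<otimes>\<^bsub>G\<^esub> y = c (n + m) [^]\<^bsub>G\<^esub> (int (q ^ m) * i + int (q ^ n) * j)"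
        using G.root_chain_int_pow_lift[of c q n i m, OF c(1,2)] G.root_chain_int_pow_lift[of c q m j n, OF c(1,2)]
          c(1) by (simp add: xy G.int_pow_mult add.commute)
      moreover have "d (n + m) [^]\<^bsub>H\<^esub> (int (q ^ m) * i + int (q ^ n) * j)
          = d n [^]\<^bsub>H\<^esub> i \<otimes>\<^bsub>H\<^esub> d m [^]\<^bsub>H\<^esub> j"
        using H.root_chain_int_pow_lift[of d q n i m, OF d(1,2)] H.root_chain_int_pow_lift[of d q m j n, OF d(1,2)]
          d(1) by (simp add: H.int_pow_mult add.commute)
      ultimately show ?thesis using \<Phi> xy by simp
    qed
  qed
  moreover have "bij_betw \<Phi> (carrier G) (carrier H)"
  proof (rule bij_betw_imageI)
    show "inj_on \<Phi> (carrier G)"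
    proof (rule inj_onI)
      fix x y assume "x \<in> carrier G" "y \<in> carrier G" "\<Phi> x = \<Phi> y"
      moreover obtain n i m j where "x = c n [^]\<^bsub>G\<^esub> (i::int)" "y = c m [^]\<^bsub>G\<^esub> (j::int)"
        using c_cover calculation(1,2) by blast
      ultimately show "x = y" using \<Phi> same by simp
    qed
    show "\<Phi> ` carrier G = carrier H"
    proof
      show "\<Phi> ` carrier G \<subseteq> carrier H" using hom_carrier[OF hom] .
      show "carrier H \<subseteq> \<Phi> ` carrier G"
      proof
        fix z assume "z \<in> carrier H"
        then obtain n where "z \<in> H.cyc (d n)" using d(4) by blast
        then obtain i where "z = d n [^]\<^bsub>H\<^esub> (i::int)" by (rule H.mem_cycE)
        then have "z = \<Phi> (c n [^]\<^bsub>G\<^esub> i)" using \<Phi> by simp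
        then show "z \<in> \<Phi> ` carrier G" using c(1) by auto
      qed
    qed
  qed
  ultimately show ?thesis by (auto intro: is_isoI isoI)
qed

section \<open>Extending partial endomorphisms\<close>

context comm_group
begin

definition hom_graph :: "('a \<times> 'a) set \<Rightarrow> bool" where
  "hom_graph \<Gamma> \<longleftrightarrow> \<Gamma> \<subseteq> carrier G \<times> carrier G \<and> (\<one>, \<one>) \<in> \<Gamma>
     \<and> (\<forall>a x b y. (a, x) \<in> \<Gamma> \<longrightarrow> (b, y) \<in> \<Gamma> \<longrightarrow> (a \<otimes> b, x \<otimes> y) \<in> \<Gamma>)
     \<and> (\<forall>a x. (a, x) \<in> \<Gamma> \<longrightarrow> (inv a, inv x) \<in> \<Gamma>)
     \<and> single_valued \<Gamma>"

lemma hom_graph_carrier: "hom_graph \<Gamma> \<Longrightarrow> (a, x) \<in> \<Gamma> \<Longrightarrow> a \<in> carrier G \<and> x \<in> carrier G"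
  and hom_graph_one: "hom_graph \<Gamma> \<Longrightarrow> (\<one>, \<one>) \<in> \<Gamma>"
  and hom_graph_mult: "hom_graph \<Gamma> \<Longrightarrow> (a, x) \<in> \<Gamma> \<Longrightarrow> (b, y) \<in> \<Gamma> \<Longrightarrow> (a \<otimes> b, x \<otimes> y) \<in> \<Gamma>"
  and hom_graph_inv: "hom_graph \<Gamma> \<Longrightarrow> (a, x) \<in> \<Gamma> \<Longrightarrow> (inv a, inv x) \<in> \<Gamma>"
  and hom_graph_unique: "hom_graph \<Gamma> \<Longrightarrow> (a, x) \<in> \<Gamma> \<Longrightarrow> (a, y) \<in> \<Gamma> \<Longrightarrow> x = y"
  unfolding hom_graph_def single_valued_def by blast+

lemma hom_graph_int_pow:
  assumes "hom_graph \<Gamma>" "(a, x) \<in> \<Gamma>"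
  shows "(a [^] (i::int), x [^] i) \<in> \<Gamma>"
proof -
  have nat_pow: "(a [^] n, x [^] n) \<in> \<Gamma>" for n :: nat
    by (induction n) (use assms hom_graph_one hom_graph_mult in auto)
  then show ?thesis
    using assms hom_graph_inv hom_graph_carrier
    by (cases i rule: int_cases2) (simp_all add: int_pow_int int_pow_neg_int)
qed

lemma subgroup_Domain_hom_graph: "hom_graph \<Gamma> \<Longrightarrow> subgroup (Domain \<Gamma>) G"
  by (rule subgroupI) (auto dest: hom_graph_carrier hom_graph_mult hom_graph_inv intro: hom_graph_one)

lemma hom_graph_Id_on: "subgroup H G \<Longrightarrow> hom_graph (Id_on H)"
  unfolding hom_graph_def single_valued_def
  by (auto dest: subgroup.mem_carrier intro: subgroup.one_closed subgroup.m_closed subgroup.m_inv_closed)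

lemma hom_graph_Union:
  assumes "C \<noteq> {}" "\<And>\<Gamma>. \<Gamma> \<in> C \<Longrightarrow> hom_graph \<Gamma>"
    and chain: "\<And>\<Gamma> \<Delta>. \<Gamma> \<in> C \<Longrightarrow> \<Delta> \<in> C \<Longrightarrow> \<Gamma> \<subseteq> \<Delta> \<or> \<Delta> \<subseteq> \<Gamma>"
  shows "hom_graph (\<Union>C)"
proof -
  have common: "\<exists>\<Gamma>\<in>C. u \<in> \<Gamma> \<and> v \<in> \<Gamma>" if "u \<in> \<Union>C" "v \<in> \<Union>C" for u v
    using that chain by blast
  show ?thesis
    unfolding hom_graph_def single_valued_def
  proof (intro conjI allI impI)
    show "\<Union>C \<subseteq> carrier G \<times> carrier G" using assms(2) unfolding hom_graph_def by blast
    show "(\<one>, \<one>) \<in> \<Union>C" using assms(1,2) hom_graph_one by blast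
    show "(a \<otimes> b, x \<otimes> y) \<in> \<Union>C" if "(a, x) \<in> \<Union>C" "(b, y) \<in> \<Union>C" for a x b y
      using common[OF that] assms(2) hom_graph_mult by blast
    show "(inv a, inv x) \<in> \<Union>C" if "(a, x) \<in> \<Union>C" for a x
      using that assms(2) hom_graph_inv by blast
    show "x = y" if "(a, x) \<in> \<Union>C" "(a, y) \<in> \<Union>C" for a x y
      using common[OF that] assms(2) hom_graph_unique by blast
  qed
qed

lemma hom_graph_total:
  assumes "hom_graph \<Gamma>" "Domain \<Gamma> = carrier G"
  obtains f where "f \<in> hom G G" "\<And>x. x \<in> carrier G \<Longrightarrow> (x, f x) \<in> \<Gamma>"
proof -
  define f where "f x = (THE y. (x, y) \<in> \<Gamma>)" for x
  have graph: "(x, f x) \<in> \<Gamma>" if "x \<in> carrier G" for x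
  proof -
    from that assms(2) have "x \<in> Domain \<Gamma>" by simp
    then obtain y where y: "(x, y) \<in> \<Gamma>" by blast
    have "f x = y"
      unfolding f_def using y hom_graph_unique[OF assms(1) _ y] by (rule the_equality)
    then show ?thesis using y by simp
  qed
  have "f \<in> hom G G"
  proof (rule homI)
    show "f x \<in> carrier G" if "x \<in> carrier G" for x
      using graph[OF that] assms(1) hom_graph_carrier by blast
    show "f (x \<otimes> y) = f x \<otimes> f y" if "x \<in> carrier G" "y \<in> carrier G" for x y
      using hom_graph_unique[OF assms(1) graph hom_graph_mult[OF assms(1) graph graph]] that
      by simp
  qed
  then show ?thesis using that graph by blast
qed

lemma hom_graph_extends_to_hom:
  assumes \<Gamma>0: "hom_graph \<Gamma>0" "Range \<Gamma>0 \<subseteq> B"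
    and step: "\<And>\<Gamma>. hom_graph \<Gamma> \<Longrightarrow> \<Gamma>0 \<subseteq> \<Gamma> \<Longrightarrow> Range \<Gamma> \<subseteq> B \<Longrightarrow> Domain \<Gamma> \<noteq> carrier G
       \<Longrightarrow> \<exists>\<Gamma>'. hom_graph \<Gamma>' \<and> \<Gamma> \<subset> \<Gamma>' \<and> Range \<Gamma>' \<subseteq> B"
  obtains f where "f \<in> hom G G" "f ` carrier G \<subseteq> B" "\<And>x y. (x, y) \<in> \<Gamma>0 \<Longrightarrow> f x = y"
proof -
  define A where "A = {\<Gamma>. hom_graph \<Gamma> \<and> \<Gamma>0 \<subseteq> \<Gamma> \<and> Range \<Gamma> \<subseteq> B}"
  have "\<exists>M\<in>A. \<forall>\<Gamma>\<in>A. M \<subseteq> \<Gamma> \<longrightarrow> \<Gamma> = M"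
  proof (rule subset_Zorn_nonempty)
    have "\<Gamma>0 \<in> A" using \<Gamma>0 unfolding A_def by simp
    then show "A \<noteq> {}" by blast
    show "\<Union>C \<in> A" if C: "C \<noteq> {}" "subset.chain A C" for C
    proof -
      have CA: "C \<subseteq> A" and chain: "\<And>\<Gamma> \<Delta>. \<Gamma> \<in> C \<Longrightarrow> \<Delta> \<in> C \<Longrightarrow> \<Gamma> \<subseteq> \<Delta> \<or> \<Delta> \<subseteq> \<Gamma>"
        using C(2) unfolding subset.chain_def by auto
      have "hom_graph (\<Union>C)"
        by (rule hom_graph_Union[OF C(1) _ chain]) (use CA in \<open>auto simp: A_def\<close>)
      moreover obtain \<Gamma> where "\<Gamma> \<in> C" using C(1) by blast
      then have "\<Gamma>0 \<subseteq> \<Union>C" using CA unfolding A_def by blast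
      moreover have "Range (\<Union>C) \<subseteq> B" using CA unfolding A_def by blast
      ultimately show ?thesis unfolding A_def by simp
    qed
  qed
  then obtain M where "M \<in> A" and maximal: "\<And>\<Gamma>. \<Gamma> \<in> A \<Longrightarrow> M \<subseteq> \<Gamma> \<Longrightarrow> \<Gamma> = M"
    by blast
  then have M: "hom_graph M" "\<Gamma>0 \<subseteq> M" "Range M \<subseteq> B" unfolding A_def by auto
  have "Domain M = carrier G"
  proof (rule ccontr)
    assume "Domain M \<noteq> carrier G"
    with step[OF M] obtain \<Gamma> where "hom_graph \<Gamma>" "M \<subset> \<Gamma>" "Range \<Gamma> \<subseteq> B" by blast
    moreover from this have "\<Gamma> \<in> A" using M(2) unfolding A_def by auto
    ultimately show False using maximal[of \<Gamma>] by auto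
  qed
  then obtain f where f: "f \<in> hom G G" "\<And>x. x \<in> carrier G \<Longrightarrow> (x, f x) \<in> M"
    using hom_graph_total M(1) by blast
  moreover have "f ` carrier G \<subseteq> B" using f(2) M(3) by (auto intro: RangeI)
  moreover have "f x = y" if xy: "(x, y) \<in> \<Gamma>0" for x y
  proof -
    have "(x, y) \<in> M" "x \<in> carrier G" using xy M(2) \<Gamma>0(1) hom_graph_carrier by auto
    then show ?thesis using f(2) hom_graph_unique[OF M(1)] by blast
  qed
  ultimately show ?thesis using that by blast
qed

definition graph_extend :: "('a \<times> 'a) set \<Rightarrow> 'a \<Rightarrow> 'a \<Rightarrow> ('a \<times> 'a) set" where
  "graph_extend \<Gamma> x d = {(a \<otimes> x [^] i, y \<otimes> d [^] i) | a y (i::int). (a, y) \<in> \<Gamma>}"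

lemma mem_graph_extend:
  "(a, y) \<in> graph_extend \<Gamma> x d \<longleftrightarrow> (\<exists>b z (i::int). (b, z) \<in> \<Gamma> \<and> a = b \<otimes> x [^] i \<and> y = z \<otimes> d [^] i)"
  unfolding graph_extend_def by blast

lemma subset_graph_extend: "hom_graph \<Gamma> \<Longrightarrow> \<Gamma> \<subseteq> graph_extend \<Gamma> x d"
  unfolding graph_extend_def by (force dest: hom_graph_carrier intro: exI[of _ "0::int"])

lemma graph_extend_point:
  "hom_graph \<Gamma> \<Longrightarrow> x \<in> carrier G \<Longrightarrow> d \<in> carrier G \<Longrightarrow> (x, d) \<in> graph_extend \<Gamma> x d"
  unfolding graph_extend_def by (force intro: hom_graph_one exI[of _ "1::int"])

lemma Range_graph_extend:
  assumes "subgroup B G" "Range \<Gamma> \<subseteq> B" "d \<in> B"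
  shows "Range (graph_extend \<Gamma> x d) \<subseteq> B"
  using assms unfolding graph_extend_def
  by (auto intro!: subgroup.m_closed subgroup_int_pow_closed)

lemma hom_graph_graph_extend:
  assumes \<Gamma>: "hom_graph \<Gamma>" and x: "x \<in> carrier G" and d: "d \<in> carrier G"
    and dvd: "\<And>i::int. x [^] i \<in> Domain \<Gamma> \<Longrightarrow> int m dvd i"
    and xm: "(x [^] int m, d [^] int m) \<in> \<Gamma>"
  shows "hom_graph (graph_extend \<Gamma> x d)"
  unfolding hom_graph_def single_valued_def
proof (intro conjI allI impI)
  show "graph_extend \<Gamma> x d \<subseteq> carrier G \<times> carrier G"
    unfolding graph_extend_def using hom_graph_carrier[OF \<Gamma>] x d by auto
  show "(\<one>, \<one>) \<in> graph_extend \<Gamma> x d"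
    using subset_graph_extend[OF \<Gamma>] hom_graph_one[OF \<Gamma>] by blast
next
  fix a1 y1 a2 y2
  assume "(a1, y1) \<in> graph_extend \<Gamma> x d" "(a2, y2) \<in> graph_extend \<Gamma> x d"
  then obtain b1 z1 i1 b2 z2 i2 where b: "(b1, z1) \<in> \<Gamma>" "(b2, z2) \<in> \<Gamma>"
    and a: "a1 = b1 \<otimes> x [^] (i1::int)" "a2 = b2 \<otimes> x [^] i2"
    and y: "y1 = z1 \<otimes> d [^] i1" "y2 = z2 \<otimes> d [^] (i2::int)"
    unfolding mem_graph_extend by blast
  have "a1 \<otimes> a2 = (b1 \<otimes> b2) \<otimes> x [^] (i1 + i2)" "y1 \<otimes> y2 = (z1 \<otimes> z2) \<otimes> d [^] (i1 + i2)"
    using a y b hom_graph_carrier[OF \<Gamma>] x d by (simp_all add: int_pow_mult m_ac)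
  then show "(a1 \<otimes> a2, y1 \<otimes> y2) \<in> graph_extend \<Gamma> x d"
    using hom_graph_mult[OF \<Gamma> b] unfolding mem_graph_extend by blast
next
  fix a1 y1
  assume "(a1, y1) \<in> graph_extend \<Gamma> x d"
  then obtain b1 z1 i1 where b: "(b1, z1) \<in> \<Gamma>" and a: "a1 = b1 \<otimes> x [^] i1"
    and y: "y1 = z1 \<otimes> d [^] (i1::int)"
    unfolding mem_graph_extend by blast
  have "inv a1 = inv b1 \<otimes> x [^] (- i1)" "inv y1 = inv z1 \<otimes> d [^] (- i1)"
    using a y b hom_graph_carrier[OF \<Gamma>] x d by (simp_all add: inv_mult int_pow_neg m_comm)
  then show "(inv a1, inv y1) \<in> graph_extend \<Gamma> x d"
    using hom_graph_inv[OF \<Gamma> b] unfolding mem_graph_extend by blast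
next
  fix a y1 y2
  assume "(a, y1) \<in> graph_extend \<Gamma> x d" "(a, y2) \<in> graph_extend \<Gamma> x d"
  then obtain b1 z1 i1 b2 z2 i2 where b: "(b1, z1) \<in> \<Gamma>" "(b2, z2) \<in> \<Gamma>"
    and a: "a = b1 \<otimes> x [^] (i1::int)" "a = b2 \<otimes> x [^] i2"
    and y: "y1 = z1 \<otimes> d [^] i1" "y2 = z2 \<otimes> d [^] (i2::int)"
    unfolding mem_graph_extend by blast
  have bz: "b1 \<in> carrier G" "b2 \<in> carrier G" "z1 \<in> carrier G" "z2 \<in> carrier G"
    using b hom_graph_carrier[OF \<Gamma>] by auto
  have diff: "(inv b2 \<otimes> b1, inv z2 \<otimes> z1) \<in> \<Gamma>"
    using hom_graph_mult[OF \<Gamma> hom_graph_inv[OF \<Gamma> b(2)] b(1)] .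
  have "inv b2 \<otimes> b1 = x [^] (i2 - i1)"
  proof -
    have "inv b2 \<otimes> b1 = inv b2 \<otimes> (b2 \<otimes> x [^] i2) \<otimes> inv (x [^] i1)"
      using a bz x by (simp add: m_assoc)
    also have "\<dots> = x [^] (i2 - i1)"
      using bz x by (simp add: int_pow_diff m_assoc[symmetric])
    finally show ?thesis .
  qed
  moreover from this have "int m dvd i2 - i1" using diff dvd by (metis Domain.DomainI)
  then obtain t where "i2 - i1 = int m * t" by (auto elim: dvdE)
  then have "(x [^] (i2 - i1), d [^] (i2 - i1)) \<in> \<Gamma>"
    using hom_graph_int_pow[OF \<Gamma> xm, of t] x d by (simp add: int_pow_pow)
  ultimately have "inv z2 \<otimes> z1 = d [^] (i2 - i1)"
    using diff hom_graph_unique[OF \<Gamma>] by metis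
  then have "z1 = z2 \<otimes> d [^] (i2 - i1)" using bz d by (metis inv_solve_left int_pow_closed)
  then show "y1 = y2" using y bz d by (simp add: m_assoc flip: int_pow_mult)
qed

end

section \<open>Primary abelian groups\<close>

locale p_primary_group = comm_group G for G (structure) +
  fixes p :: nat
  assumes prime_p: "Factorial_Ring.prime p"
    and p_power_torsion: "x \<in> carrier G \<Longrightarrow> \<exists>n. x [^] (p ^ n) = \<one>"
begin

lemma p_gt_1: "p > 1"
  using prime_p prime_gt_1_nat by blast

lemma ord_eq_p_power:
  assumes "x \<in> carrier G"
  obtains k where "ord x = p ^ k"
proof -
  obtain n where "x [^] (p ^ n) = \<one>" using p_power_torsion assms by blast
  then have "ord x dvd p ^ n" using assms pow_eq_id by blast
  then show ?thesis using that divides_primepow_nat[OF prime_p] by blast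
qed

lemma ord_eq_p:
  assumes "x \<in> carrier G" "x [^] p = \<one>" "x \<noteq> \<one>"
  shows "ord x = p"
proof -
  have "ord x dvd p" using assms pow_eq_id by blast
  moreover have "ord x \<noteq> 1" using assms ord_eq_1 by blast
  ultimately show ?thesis using prime_p prime_nat_iff by blast
qed

lemma exists_order_p:
  assumes "x \<in> carrier G" "x \<noteq> \<one>"
  obtains a where "a \<in> carrier G" "a [^] p = \<one>" "a \<noteq> \<one>"
proof -
  obtain k where k: "ord x = p ^ k" using ord_eq_p_power assms(1) by blast
  have "k \<noteq> 0" using k assms ord_eq_1 by fastforce
  then obtain j where j: "k = Suc j" using not0_implies_Suc by blast
  have "ord (x [^] (p ^ j)) = p" using assms(1) p_gt_1 by (simp add: ord_pow k j)
  then show ?thesis using that[of "x [^] (p ^ j)"] assms(1) p_gt_1 pow_eq_id ord_eq_1 by fastforce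
qed

lemma hom_graph_extends_into_subgroup:
  assumes B: "subgroup B G" and \<Gamma>0: "hom_graph \<Gamma>0" "Range \<Gamma>0 \<subseteq> B"
    and roots: "\<And>\<Gamma> x s y. hom_graph \<Gamma> \<Longrightarrow> \<Gamma>0 \<subseteq> \<Gamma> \<Longrightarrow> Range \<Gamma> \<subseteq> B \<Longrightarrow> x \<in> carrier G
      \<Longrightarrow> (x [^] (p ^ s), y) \<in> \<Gamma> \<Longrightarrow> \<exists>d\<in>B. d [^] (p ^ s) = y"
  obtains f where "f \<in> hom G G" "f ` carrier G \<subseteq> B" "\<And>x y. (x, y) \<in> \<Gamma>0 \<Longrightarrow> f x = y"
proof (rule hom_graph_extends_to_hom[OF \<Gamma>0])
  fix \<Gamma> assume \<Gamma>: "hom_graph \<Gamma>" "\<Gamma>0 \<subseteq> \<Gamma>" "Range \<Gamma> \<subseteq> B" and "Domain \<Gamma> \<noteq> carrier G"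
  moreover have "Domain \<Gamma> \<subseteq> carrier G" using \<Gamma>(1) hom_graph_carrier by blast
  ultimately obtain x where x: "x \<in> carrier G" "x \<notin> Domain \<Gamma>" by blast
  obtain n where "x [^] (p ^ n) = \<one>" using p_power_torsion x(1) by blast
  then obtain m where m: "m dvd p ^ n" "\<And>i::int. x [^] i \<in> Domain \<Gamma> \<longleftrightarrow> int m dvd i"
    by (rule int_pow_in_subgroup_iff[OF subgroup_Domain_hom_graph[OF \<Gamma>(1)] x(1)]) (use p_gt_1 in auto)
  obtain s where s: "m = p ^ s" using m(1) divides_primepow_nat[OF prime_p] by blast
  have "x [^] int m \<in> Domain \<Gamma>" using m(2) by simp
  then obtain y where "(x [^] int m, y) \<in> \<Gamma>" by blast
  then have y: "(x [^] (p ^ s), y) \<in> \<Gamma>" unfolding s int_pow_int .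
  then obtain d where d: "d \<in> B" "d [^] (p ^ s) = y" using roots[OF \<Gamma> x(1)] by blast
  have dC: "d \<in> carrier G" using d(1) B subgroup.subset by blast
  have "(x [^] int m, d [^] int m) \<in> \<Gamma>" unfolding s int_pow_int using y d by simp
  then have "hom_graph (graph_extend \<Gamma> x d)"
    using hom_graph_graph_extend[OF \<Gamma>(1) x(1) dC] m(2) by blast
  moreover have "\<Gamma> \<subset> graph_extend \<Gamma> x d"
    using subset_graph_extend[OF \<Gamma>(1)] graph_extend_point[OF \<Gamma>(1) x(1) dC] x(2) by blast
  moreover have "Range (graph_extend \<Gamma> x d) \<subseteq> B"
    using Range_graph_extend[OF B \<Gamma>(3) d(1)] .
  ultimately show "\<exists>\<Gamma>'. hom_graph \<Gamma>' \<and> \<Gamma> \<subset> \<Gamma>' \<and> Range \<Gamma>' \<subseteq> B" by blast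
qed (use that in blast)

lemma divisible_subgroup_roots:
  assumes B: "subgroup B G" "\<And>y. y \<in> B \<Longrightarrow> \<exists>z\<in>B. z [^] p = y" and y: "y \<in> B"
  shows "\<exists>z\<in>B. z [^] (p ^ s) = y"
  using y
proof (induction s arbitrary: y)
  case 0
  then show ?case using subgroup.mem_carrier[OF B(1)] by force
next
  case (Suc s)
  then obtain w where w: "w \<in> B" "w [^] p = y" using B(2) by blast
  then obtain z where z: "z \<in> B" "z [^] (p ^ s) = w" using Suc.IH by blast
  then have "z [^] (p ^ Suc s) = y"
    using w B(1) subgroup.mem_carrier by (fastforce simp: nat_pow_pow mult.commute)
  then show ?case using z(1) by blast
qed

lemma hom_graph_extends_into_divisible:
  assumes B: "subgroup B G" "\<And>y. y \<in> B \<Longrightarrow> \<exists>z\<in>B. z [^] p = y"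
    and \<Gamma>0: "hom_graph \<Gamma>0" "Range \<Gamma>0 \<subseteq> B"
  obtains f where "f \<in> hom G G" "f ` carrier G \<subseteq> B" "\<And>x y. (x, y) \<in> \<Gamma>0 \<Longrightarrow> f x = y"
proof (rule hom_graph_extends_into_subgroup[OF B(1) \<Gamma>0])
  show "\<exists>d\<in>B. d [^] (p ^ s) = y" if "Range \<Gamma> \<subseteq> B" "(x [^] (p ^ s), y) \<in> \<Gamma>" for \<Gamma> x s y
    using that divisible_subgroup_roots[OF B] by blast
qed (use that in blast)

lemma ord_root_chain:
  assumes c: "\<And>n. c n \<in> carrier G" "\<And>n. c (Suc n) [^] p = c n" "ord (c 0) = p"
  shows "ord (c n) = p ^ Suc n"
proof (induction n)
  case (Suc n)
  obtain k where k: "ord (c (Suc n)) = p ^ k" using ord_eq_p_power c(1) by blast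
  have "k \<noteq> 0"
  proof
    assume "k = 0"
    then have "c (Suc n) = \<one>" using k c(1) ord_eq_1 by simp
    then have "c n = \<one>" using c(2)[of n] by simp
    then show False using Suc p_gt_1 by simp
  qed
  then obtain j where j: "k = Suc j" using not0_implies_Suc by blast
  have "ord (c n) = p ^ j" using ord_pow[OF c(1), of p "Suc n"] c(2) k j p_gt_1 by simp
  then have "p ^ j = p ^ Suc n" using Suc by simp
  then have "j = Suc n" using p_gt_1 power_inject_exp by blast
  then show ?case using k j by simp
qed (use c in simp)

lemma union_root_chain:
  assumes c: "\<And>n. c n \<in> carrier G" "\<And>n. c (Suc n) [^] p = c n" "ord (c 0) = p"
  defines "U \<equiv> \<Union>n. cyc (c n)"
  shows "subgroup U G" and "\<And>y. y \<in> U \<Longrightarrow> \<exists>z\<in>U. z [^] p = y"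
    and "\<And>y. y \<in> U \<Longrightarrow> y [^] p = \<one> \<Longrightarrow> y \<in> cyc (c 0)"
proof -
  have mono: "cyc (c n) \<subseteq> cyc (c (n + k))" for n k
  proof (rule cyc_subset)
    have "c n = c (n + k) [^] int (p ^ k)"
      unfolding int_pow_int by (rule root_chain_pow[of c p n k, OF c(1,2)])
    then show "c n \<in> cyc (c (n + k))" by (metis int_pow_mem_cyc)
  qed (rule c(1))
  show "subgroup U G"
  proof (rule subgroupI)
    show "U \<subseteq> carrier G" unfolding U_def using subgroup.subset[OF subgroup_cyc[OF c(1)]] by blast
    have "\<one> \<in> U" unfolding U_def using one_mem_cyc by blast
    then show "U \<noteq> {}" by blast
    show "inv y \<in> U" if "y \<in> U" for y
      using that subgroup.m_inv_closed[OF subgroup_cyc[OF c(1)]] unfolding U_def by blast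
    show "y \<otimes> z \<in> U" if yz: "y \<in> U" "z \<in> U" for y z
    proof -
      obtain n m where "y \<in> cyc (c n)" "z \<in> cyc (c m)" using yz unfolding U_def by blast
      then have "y \<in> cyc (c (n + m))" "z \<in> cyc (c (n + m))"
        using mono[of n m] mono[of m n] by (auto simp: add.commute)
      then show ?thesis
        using subgroup.m_closed[OF subgroup_cyc[OF c(1)]] unfolding U_def by blast
    qed
  qed
  show "\<exists>z\<in>U. z [^] p = y" if y: "y \<in> U" for y
  proof -
    obtain n i where "y = c n [^] (i::int)" using y unfolding U_def by (blast elim: mem_cycE)
    have "(c (Suc n) [^] i) [^] int p = (c (Suc n) [^] int p) [^] i"
      using c(1) by (simp add: int_pow_pow mult.commute)
    then have "y = (c (Suc n) [^] i) [^] p" using c(2)[of n] \<open>y = c n [^] i\<close> by (simp add: int_pow_int)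
    moreover have "c (Suc n) [^] i \<in> U" unfolding U_def using int_pow_mem_cyc by blast
    ultimately show ?thesis by blast
  qed
  show "y \<in> cyc (c 0)" if y: "y \<in> U" "y [^] p = \<one>" for y
  proof -
    obtain n where "y \<in> cyc (c n)" using y(1) unfolding U_def by blast
    moreover have "ord (c n) = p ^ n * p" using ord_root_chain[OF c] by (simp add: mult.commute)
    ultimately have "y \<in> cyc (c n [^] (p ^ n))"
      using cyc_torsion_mem_cyc_pow[OF c(1)] y(2) p_gt_1 by simp
    then show ?thesis using root_chain_pow[of c p 0 n, OF c(1,2)] by simp
  qed
qed

definition pow_subgroup :: "nat \<Rightarrow> 'a set" where
  "pow_subgroup j = (\<lambda>y. y [^] (p ^ j)) ` carrier G"

lemma pow_mem_pow_subgroup: "x \<in> carrier G \<Longrightarrow> x [^] (p ^ j) \<in> pow_subgroup j"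
  by (simp add: pow_subgroup_def)

lemma subgroup_pow_subgroup: "subgroup (pow_subgroup j) G"
proof (rule subgroupI)
  show "pow_subgroup j \<subseteq> carrier G" "pow_subgroup j \<noteq> {}"
    by (auto simp: pow_subgroup_def)
  show "inv y \<in> pow_subgroup j" if "y \<in> pow_subgroup j" for y
    using that by (auto simp: pow_subgroup_def nat_pow_inv[symmetric])
  show "y \<otimes> z \<in> pow_subgroup j" if "y \<in> pow_subgroup j" "z \<in> pow_subgroup j" for y z
    using that by (auto simp: pow_subgroup_def pow_mult_distrib[symmetric] m_comm)
qed

lemma cyc_inter_pow_subgroup:
  assumes b: "b \<in> carrier G" "ord b = p ^ Suc n" "b [^] (p ^ n) \<notin> pow_subgroup (Suc n)"
    and i: "b [^] (i::int) \<in> pow_subgroup (Suc n)"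
  shows "b [^] i = \<one>"
proof (rule ccontr)
  assume "b [^] i \<noteq> \<one>"
  then have ndvd: "\<not> int (p ^ Suc n) dvd i" using b by (simp add: int_pow_eq_id)
  define g where "g = gcd i (int (p ^ Suc n))"
  have "nat g dvd p ^ Suc n"
    unfolding g_def by (simp add: nat_dvd_iff)
  then obtain s where s: "s \<le> Suc n" "nat g = p ^ s" using divides_primepow_nat[OF prime_p] by blast
  have gs: "g = int (p ^ s)" using s(2) unfolding g_def by (metis gcd_ge_0_int int_nat_eq)
  have "s \<noteq> Suc n" using ndvd gs unfolding g_def by (metis gcd_dvd1)
  with s(1) have sn: "s \<le> n" by simp
  obtain u v where uv: "u * i + v * int (p ^ Suc n) = g" using bezout_int unfolding g_def by blast
  have g_eq: "g = i * u + int (p ^ Suc n) * v" using uv by (metis add.commute mult.commute)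
  have ord_pow: "b [^] int (p ^ Suc n) = \<one>" unfolding int_pow_int using b by (simp add: pow_eq_id)
  have "b [^] (p ^ s) = b [^] g" unfolding gs by (rule int_pow_int[symmetric])
  also have "\<dots> = (b [^] i) [^] u \<otimes> (b [^] int (p ^ Suc n)) [^] v"
    using b(1) by (simp only: g_eq int_pow_mult int_pow_pow)
  also have "\<dots> = (b [^] i) [^] u" using b(1) ord_pow by simp
  finally have "b [^] (p ^ s) \<in> pow_subgroup (Suc n)"
    using i subgroup_int_pow_closed[OF subgroup_pow_subgroup] by simp
  then have "(b [^] (p ^ s)) [^] int (p ^ (n - s)) \<in> pow_subgroup (Suc n)"
    by (rule subgroup_int_pow_closed[OF subgroup_pow_subgroup])
  then have "(b [^] (p ^ s)) [^] (p ^ (n - s)) \<in> pow_subgroup (Suc n)" unfolding int_pow_int .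
  moreover have "(b [^] (p ^ s)) [^] (p ^ (n - s)) = b [^] (p ^ n)"
    using b(1) sn by (simp add: nat_pow_pow flip: power_add)
  ultimately show False using b(3) by simp
qed

lemma hom_graph_cyc_projection:
  assumes b: "b \<in> carrier G" "ord b = p ^ Suc n" "b [^] (p ^ n) \<notin> pow_subgroup (Suc n)"
  shows "hom_graph {(b [^] i \<otimes> w, b [^] i) | (i::int) w. w \<in> pow_subgroup (Suc n)}"
    (is "hom_graph ?\<Gamma>")
proof -
  note W = subgroup_pow_subgroup[of "Suc n"]
  have mem: "(a, y) \<in> ?\<Gamma> \<longleftrightarrow> (\<exists>(i::int) w. w \<in> pow_subgroup (Suc n) \<and> a = b [^] i \<otimes> w \<and> y = b [^] i)"
    for a y by blast
  show ?thesis
    unfolding hom_graph_def single_valued_def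
  proof (intro conjI allI impI)
    show "?\<Gamma> \<subseteq> carrier G \<times> carrier G" using b(1) subgroup.mem_carrier[OF W] by auto
    have "(\<one>, \<one>) = (b [^] (0::int) \<otimes> \<one>, b [^] (0::int))" by simp
    then show "(\<one>, \<one>) \<in> ?\<Gamma>" using subgroup.one_closed[OF W] by blast
  next
    fix a1 y1 a2 y2 assume "(a1, y1) \<in> ?\<Gamma>" "(a2, y2) \<in> ?\<Gamma>"
    then obtain i1 w1 i2 w2 where w: "w1 \<in> pow_subgroup (Suc n)" "w2 \<in> pow_subgroup (Suc n)"
      and a: "a1 = b [^] (i1::int) \<otimes> w1" "a2 = b [^] (i2::int) \<otimes> w2"
      and y: "y1 = b [^] i1" "y2 = b [^] i2"
      unfolding mem by blast
    have "a1 \<otimes> a2 = b [^] (i1 + i2) \<otimes> (w1 \<otimes> w2)" "y1 \<otimes> y2 = b [^] (i1 + i2)"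
      using a y w b(1) subgroup.mem_carrier[OF W] by (simp_all add: int_pow_mult m_ac)
    then show "(a1 \<otimes> a2, y1 \<otimes> y2) \<in> ?\<Gamma>" using subgroup.m_closed[OF W w] unfolding mem by blast
  next
    fix a1 y1 assume "(a1, y1) \<in> ?\<Gamma>"
    then obtain i1 w1 where w: "w1 \<in> pow_subgroup (Suc n)"
      and a: "a1 = b [^] (i1::int) \<otimes> w1" and y: "y1 = b [^] i1"
      unfolding mem by blast
    have "inv a1 = b [^] (- i1) \<otimes> inv w1" "inv y1 = b [^] (- i1)"
      using a y w b(1) subgroup.mem_carrier[OF W] by (simp_all add: inv_mult int_pow_neg m_comm)
    then show "(inv a1, inv y1) \<in> ?\<Gamma>" using subgroup.m_inv_closed[OF W w] unfolding mem by blast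
  next
    fix a y1 y2 assume "(a, y1) \<in> ?\<Gamma>" "(a, y2) \<in> ?\<Gamma>"
    then obtain i1 w1 i2 w2 where w: "w1 \<in> pow_subgroup (Suc n)" "w2 \<in> pow_subgroup (Suc n)"
      and a: "a = b [^] (i1::int) \<otimes> w1" "a = b [^] (i2::int) \<otimes> w2"
      and y: "y1 = b [^] i1" "y2 = b [^] i2"
      unfolding mem by blast
    have wC: "w1 \<in> carrier G" "w2 \<in> carrier G" using w subgroup.mem_carrier[OF W] by auto
    have "b [^] (i1 - i2) = w2 \<otimes> inv w1"
    proof -
      have "b [^] (i1 - i2) = b [^] i1 \<otimes> w1 \<otimes> inv w1 \<otimes> inv (b [^] i2)"
        using b(1) wC by (simp add: int_pow_diff m_assoc)
      also have "\<dots> = (w2 \<otimes> inv w1) \<otimes> (b [^] i2 \<otimes> inv (b [^] i2))"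
        unfolding a(1)[symmetric] a(2) using b(1) wC by (simp only: m_ac m_closed inv_closed int_pow_closed)
      also have "\<dots> = w2 \<otimes> inv w1" using b(1) wC by simp
      finally show ?thesis .
    qed
    then have "b [^] (i1 - i2) \<in> pow_subgroup (Suc n)"
      using subgroup.m_closed[OF W w(2) subgroup.m_inv_closed[OF W w(1)]] by simp
    then have "b [^] (i1 - i2) = \<one>" by (rule cyc_inter_pow_subgroup[OF b])
    then show "y1 = y2" using y b(1) by (simp add: int_pow_eq_id int_pow_eq dvd_diff_commute)
  qed
qed

lemma retraction_onto_cyc:
  assumes b: "b \<in> carrier G" "ord b = p ^ Suc n" "b [^] (p ^ n) \<notin> pow_subgroup (Suc n)"
  shows "\<exists>e\<in>hom G G. e ` carrier G \<subseteq> cyc b \<and> (\<forall>y\<in>cyc b. e y = y)"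
proof -
  define \<Gamma>0 where "\<Gamma>0 = {(b [^] i \<otimes> w, b [^] i) | (i::int) w. w \<in> pow_subgroup (Suc n)}"
  have \<Gamma>0: "hom_graph \<Gamma>0" "Range \<Gamma>0 \<subseteq> cyc b"
    using hom_graph_cyc_projection[OF b] unfolding \<Gamma>0_def by auto
  have pow_in_\<Gamma>0: "(w, \<one>) \<in> \<Gamma>0" if "w \<in> pow_subgroup (Suc n)" for w
  proof -
    have "(w, \<one>) = (b [^] (0::int) \<otimes> w, b [^] (0::int))"
      using that subgroup.mem_carrier[OF subgroup_pow_subgroup] by simp
    then show ?thesis using that unfolding \<Gamma>0_def by blast
  qed
  obtain e where e: "e \<in> hom G G" "e ` carrier G \<subseteq> cyc b" "\<And>x y. (x, y) \<in> \<Gamma>0 \<Longrightarrow> e x = y"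
  proof (rule hom_graph_extends_into_subgroup[OF subgroup_cyc[OF b(1)] \<Gamma>0])
    fix \<Gamma> x s y
    assume \<Gamma>: "hom_graph \<Gamma>" "\<Gamma>0 \<subseteq> \<Gamma>" "Range \<Gamma> \<subseteq> cyc b"
      and x: "x \<in> carrier G" and y: "(x [^] (p ^ s), y) \<in> \<Gamma>"
    show "\<exists>d\<in>cyc b. d [^] (p ^ s) = y"
    proof (cases "s \<le> Suc n")
      case True
      have "((x [^] (p ^ s)) [^] int (p ^ (Suc n - s)), y [^] int (p ^ (Suc n - s))) \<in> \<Gamma>"
        by (rule hom_graph_int_pow[OF \<Gamma>(1) y])
      moreover have "(x [^] (p ^ s)) [^] (p ^ (Suc n - s)) = x [^] (p ^ Suc n)"
        using x True by (simp add: nat_pow_pow flip: power_add)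
      moreover have "(x [^] (p ^ Suc n), \<one>) \<in> \<Gamma>"
        using \<Gamma>(2) pow_in_\<Gamma>0 pow_mem_pow_subgroup[OF x] by blast
      ultimately have "y [^] (p ^ (Suc n - s)) = \<one>"
        using hom_graph_unique[OF \<Gamma>(1)] unfolding int_pow_int by metis
      moreover have "ord b = p ^ s * p ^ (Suc n - s)" using b(2) True by (simp flip: power_add)
      moreover have "y \<in> cyc b" using y \<Gamma>(3) by blast
      ultimately have "y \<in> cyc (b [^] (p ^ s))"
        using cyc_torsion_mem_cyc_pow[OF b(1)] p_gt_1 by simp
      then obtain t where "y = (b [^] (p ^ s)) [^] (t::int)" by (rule mem_cycE)
      then have "(b [^] t) [^] (p ^ s) = y"
        using b(1) by (simp add: int_pow_pow mult.commute flip: int_pow_int)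
      then show ?thesis by (intro bexI[of _ "b [^] t"]) simp_all
    next
      case False
      then obtain k where "s = Suc n + k" by (metis le_add_diff_inverse nat_le_linear)
      then have "x [^] (p ^ s) = (x [^] (p ^ k)) [^] (p ^ Suc n)"
        using x by (simp add: nat_pow_pow power_add ac_simps)
      then have "x [^] (p ^ s) \<in> pow_subgroup (Suc n)"
        using x pow_mem_pow_subgroup[of "x [^] (p ^ k)" "Suc n"] by simp
      then have "y = \<one>" using pow_in_\<Gamma>0 \<Gamma>(2) y hom_graph_unique[OF \<Gamma>(1)] by blast
      then show ?thesis using one_mem_cyc by force
    qed
  qed blast
  moreover have "e y = y" if y: "y \<in> cyc b" for y
  proof -
    obtain i where "y = b [^] (i::int)" using y by (rule mem_cycE)
    moreover have "(b [^] i \<otimes> \<one>, b [^] i) \<in> \<Gamma>0"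
      unfolding \<Gamma>0_def using subgroup.one_closed[OF subgroup_pow_subgroup] by blast
    ultimately show ?thesis using e(3) b(1) by simp
  qed
  ultimately show ?thesis by blast
qed

lemma p_divisible_if_socle_in_pow_subgroups:
  assumes socle: "\<And>a j. a \<in> carrier G \<Longrightarrow> a [^] p = \<one> \<Longrightarrow> a \<in> pow_subgroup j"
    and x: "x \<in> carrier G"
  shows "\<exists>y\<in>carrier G. y [^] p = x"
proof -
  have "\<forall>x\<in>carrier G. x [^] (p ^ k) = \<one> \<longrightarrow> (\<exists>y\<in>carrier G. y [^] p = x)" for k
  proof (induction k)
    case 0
    show ?case by (metis nat_pow_eone nat_pow_one one_closed power_0)
  next
    case (Suc k)
    show ?case
    proof (intro ballI impI)
      fix x assume x: "x \<in> carrier G" "x [^] (p ^ Suc k) = \<one>"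
      have "(x [^] (p ^ k)) [^] p = \<one>" using x by (simp add: nat_pow_pow mult.commute)
      then have "x [^] (p ^ k) \<in> pow_subgroup (Suc k)" using socle x(1) by simp
      then obtain y where y: "y \<in> carrier G" "x [^] (p ^ k) = (y [^] p) [^] (p ^ k)"
        by (auto simp: pow_subgroup_def nat_pow_pow mult.commute)
      define z where "z = x \<otimes> inv (y [^] p)"
      have "z [^] (p ^ k) = \<one>" using x(1) y by (simp add: z_def nat_pow_distrib nat_pow_inv)
      then obtain t where t: "t \<in> carrier G" "t [^] p = z"
        using Suc.IH x(1) y(1) by (auto simp: z_def)
      have "(t \<otimes> y) [^] p = x" using t y x(1) by (simp add: nat_pow_distrib z_def m_assoc)
      then show "\<exists>y\<in>carrier G. y [^] p = x" using t(1) y(1) by blast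
    qed
  qed
  then show ?thesis using p_power_torsion[OF x] x by blast
qed

lemma socle_mem_cyc_if_retraction:
  assumes e: "e \<in> hom G G" "\<And>x. x \<in> carrier G \<Longrightarrow> e (e x) = e x"
    and image: "\<And>y. y \<in> carrier G \<Longrightarrow> y [^] p = \<one> \<Longrightarrow> e y \<in> cyc a"
    and kernel: "\<And>c. c \<in> carrier G \<Longrightarrow> c [^] p = \<one> \<Longrightarrow> e c = \<one> \<Longrightarrow> c = \<one>"
    and v: "v \<in> carrier G" "v [^] p = \<one>"
  shows "v \<in> cyc a"
proof -
  interpret e: group_hom G G e by unfold_locales (rule e(1))
  define c where "c = v \<otimes> inv (e v)"
  have ev: "e v \<in> carrier G" "e v [^] p = \<one>"
    using v e.hom_nat_pow[OF v(1), of p, symmetric] by simp_all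
  have "c = \<one>"
  proof (rule kernel)
    show "c \<in> carrier G" "c [^] p = \<one>" using v ev by (simp_all add: c_def nat_pow_distrib nat_pow_inv)
    show "e c = \<one>" using v ev e(2) by (simp add: c_def)
  qed
  then have "v = e v" using v ev by (simp add: c_def inv_solve_right')
  then show ?thesis using image[OF v] by simp
qed

lemma divisible_socle_mem_cyc:
  assumes CE: "centrally_essential (End_ring G)"
    and divisible: "\<And>x. x \<in> carrier G \<Longrightarrow> \<exists>y\<in>carrier G. y [^] p = x"
    and u: "u \<in> carrier G" "u [^] p = \<one>" "u \<noteq> \<one>" and v: "v \<in> carrier G" "v [^] p = \<one>"
  shows "v \<in> cyc u"
proof -
  obtain c where c: "c 0 = u" "\<And>n. c n \<in> carrier G" "\<And>n. c (Suc n) [^] p = c n"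
    using root_chain[OF u(1) divisible] by blast
  define U where "U = (\<Union>n. cyc (c n))"
  have "ord (c 0) = p" using ord_eq_p u c(1) by simp
  note U = union_root_chain[of c, OF c(2,3) this, folded U_def, unfolded c(1)]
  have uU: "u \<in> U" unfolding U_def using mem_cyc_self[OF u(1)] c(1) by blast
  obtain e where e: "e \<in> hom G G" "e ` carrier G \<subseteq> U" "\<And>x y. (x, y) \<in> Id_on U \<Longrightarrow> e x = y"
    using hom_graph_extends_into_divisible[OF U(1,2) hom_graph_Id_on[OF U(1)]] by blast
  have e_fix: "y \<in> U \<Longrightarrow> e y = y" for y using e(3) by blast
  have e_idem: "e (e x) = e x" if "x \<in> carrier G" for x using that e(2) e_fix by blast
  show ?thesis
  proof (rule socle_mem_cyc_if_retraction[OF e(1) e_idem _ _ v])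
    show "e y \<in> cyc u" if "y \<in> carrier G" "y [^] p = \<one>" for y
    proof -
      have "e y [^] p = \<one>"
        using hom_nat_pow[OF e(1) that(1) is_group is_group, of p] hom_one[OF e(1) is_group is_group]
          that(2) by simp
      then show ?thesis using U(3) e(2) that(1) by blast
    qed
    show "c' = \<one>" if c': "c' \<in> carrier G" "c' [^] p = \<one>" "e c' = \<one>" for c'
    proof (rule ccontr)
      assume "c' \<noteq> \<one>"
      then have "ord c' = p" using ord_eq_p c' by blast
      let ?\<Gamma> = "graph_extend (Id_on {\<one>}) c' u"
      have triv: "hom_graph (Id_on {\<one>})" by (rule hom_graph_Id_on[OF triv_subgroup])
      have "hom_graph ?\<Gamma>"
      proof (rule hom_graph_graph_extend[OF triv c'(1) u(1)])
        show "int p dvd i" if "c' [^] i \<in> Domain (Id_on {\<one>})" for i :: int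
          using that c'(1) \<open>ord c' = p\<close> by (simp add: int_pow_eq_id)
        show "(c' [^] int p, u [^] int p) \<in> Id_on {\<one>}" using c'(2) u(2) by (simp add: int_pow_int Id_on_iff)
      qed
      moreover have "Range ?\<Gamma> \<subseteq> U"
        using Range_graph_extend[OF U(1) _ uU] subgroup.one_closed[OF U(1)] by simp
      ultimately obtain g where g: "g \<in> hom G G" "\<And>x y. (x, y) \<in> ?\<Gamma> \<Longrightarrow> g x = y"
        using hom_graph_extends_into_divisible[OF U(1,2)] by metis
      have "g c' = u" using g(2) graph_extend_point[OF triv c'(1) u(1)] by blast
      then have "e (g c') = u" using e_fix uU by simp
      moreover have "g (e c') = \<one>" using c'(3) g(1) hom_one[OF g(1) is_group is_group] by simp
      ultimately show False
        using End_ring_idempotent_commute[OF CE e(1) e_idem g(1) c'(1)] u(3) by simp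
    qed
  qed
qed

lemma not_divisible_socle_cyclic:
  assumes CE: "centrally_essential (End_ring G)"
    and not_divisible: "\<not> (\<forall>x\<in>carrier G. \<exists>y\<in>carrier G. y [^] p = x)"
  obtains a where "a \<in> carrier G" "a [^] p = \<one>"
    "\<And>v. v \<in> carrier G \<Longrightarrow> v [^] p = \<one> \<Longrightarrow> v \<in> cyc a"
proof -
  obtain a j where a: "a \<in> carrier G" "a [^] p = \<one>" "a \<notin> pow_subgroup j"
    using not_divisible p_divisible_if_socle_in_pow_subgroups by blast
  define J where "J = (LEAST j. a \<notin> pow_subgroup j)"
  have J: "a \<notin> pow_subgroup J" "\<And>j. j < J \<Longrightarrow> a \<in> pow_subgroup j"
    unfolding J_def using LeastI[of "\<lambda>j. a \<notin> pow_subgroup j", OF a(3)] not_less_Least by auto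
  have "a \<in> pow_subgroup 0" using pow_mem_pow_subgroup[OF a(1), of 0] a(1) by simp
  then have "J \<noteq> 0" using J(1) by metis
  then obtain n where n: "J = Suc n" using not0_implies_Suc by blast
  then obtain b where b: "b \<in> carrier G" "a = b [^] (p ^ n)"
    using J(2)[of n] by (auto simp: pow_subgroup_def)
  have "a \<noteq> \<one>" using J(1) subgroup.one_closed[OF subgroup_pow_subgroup] by auto
  have ord_b: "ord b = p ^ Suc n"
  proof -
    have "b [^] (p ^ Suc n) = \<one>" using a(2) b by (simp add: nat_pow_pow mult.commute)
    then obtain i where i: "i \<le> Suc n" "ord b = p ^ i"
      using b(1) pow_eq_id divides_primepow_nat[OF prime_p] by blast
    have "b [^] (p ^ n) \<noteq> \<one>" using \<open>a \<noteq> \<one>\<close> b(2) by simp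
    then have "\<not> ord b dvd p ^ n" using pow_eq_id[OF b(1)] by simp
    then have "\<not> i \<le> n" unfolding i(2) using le_imp_power_dvd by auto
    then have "i = Suc n" using i(1) by simp
    then show ?thesis using i(2) by simp
  qed
  have height: "b [^] (p ^ n) \<notin> pow_subgroup (Suc n)" using J(1) n b(2) by simp
  obtain e where e: "e \<in> hom G G" "e ` carrier G \<subseteq> cyc b" "\<And>y. y \<in> cyc b \<Longrightarrow> e y = y"
    using retraction_onto_cyc[OF b(1) ord_b height] by blast
  have e_idem: "e (e x) = e x" if "x \<in> carrier G" for x
  proof -
    show ?thesis using that e(2,3) by blast
  qed
  have "v \<in> cyc a" if v: "v \<in> carrier G" "v [^] p = \<one>" for v
  proof (rule socle_mem_cyc_if_retraction[OF e(1) e_idem _ _ v])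
    show "e y \<in> cyc a" if y: "y \<in> carrier G" "y [^] p = \<one>" for y
    proof -
      have "e y [^] p = \<one>"
        using hom_nat_pow[OF e(1) y(1) is_group is_group, of p] hom_one[OF e(1) is_group is_group]
          y(2) by simp
      moreover have "ord b = p ^ n * p" using ord_b by (simp add: mult.commute)
      ultimately show ?thesis
        using cyc_torsion_mem_cyc_pow[OF b(1)] e(2) y(1) p_gt_1 b(2) by blast
    qed
    show "c = \<one>" if c: "c \<in> carrier G" "c [^] p = \<one>" "e c = \<one>" for c
    proof (rule ccontr)
      assume "c \<noteq> \<one>"
      then have "ord c dvd ord b" using ord_eq_p c ord_b by simp
      then obtain g where g: "g \<in> hom G G"
        "\<And>x i. x \<in> carrier G \<Longrightarrow> e x = b [^] (i::int) \<Longrightarrow> g x = c [^] i"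
        using hom_through_cyc[OF e(1,2) b(1) c(1)] by blast
      have "e b = b [^] (1::int)" using e(3) mem_cyc_self b(1) by simp
      then have "g b = c" using g(2)[OF b(1)] c(1) by simp
      then have "e (g b) = \<one>" "g (e b) = c" using c(3) \<open>e b = b [^] (1::int)\<close> b(1) by simp_all
      then show False
        using End_ring_idempotent_commute[OF CE e(1) e_idem g(1) b(1)] \<open>c \<noteq> \<one>\<close> by simp
    qed
  qed
  then show ?thesis using that a(1,2) by blast
qed

end

section \<open>Abelian \<open>p\<close>-groups with cyclic socle\<close>

definition cyclic_socle :: "('a, 'b) monoid_scheme \<Rightarrow> nat \<Rightarrow> bool" where
  "cyclic_socle G p \<longleftrightarrow> (\<exists>a\<in>carrier G. a [^]\<^bsub>G\<^esub> p = \<one>\<^bsub>G\<^esub>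
     \<and> (\<forall>v\<in>carrier G. v [^]\<^bsub>G\<^esub> p = \<one>\<^bsub>G\<^esub> \<longrightarrow> (\<exists>i::int. v = a [^]\<^bsub>G\<^esub> i)))"

context p_primary_group
begin

lemma cyclic_socle_iff:
  "cyclic_socle G p \<longleftrightarrow> (\<exists>a\<in>carrier G. a [^] p = \<one> \<and> (\<forall>v\<in>carrier G. v [^] p = \<one> \<longrightarrow> v \<in> cyc a))"
  unfolding cyclic_socle_def cyc_def image_iff by blast

lemma centrally_essential_imp_cyclic_socle:
  assumes CE: "centrally_essential (End_ring G)" and nontrivial: "carrier G \<noteq> {\<one>}"
  shows "cyclic_socle G p"
proof (cases "\<forall>x\<in>carrier G. \<exists>y\<in>carrier G. y [^] p = x")
  case True
  obtain x where "x \<in> carrier G" "x \<noteq> \<one>" using nontrivial by blast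
  then obtain u where u: "u \<in> carrier G" "u [^] p = \<one>" "u \<noteq> \<one>" by (rule exists_order_p)
  then show ?thesis
    unfolding cyclic_socle_iff using divisible_socle_mem_cyc[OF CE _ u] True by blast
next
  case False
  then show ?thesis
    unfolding cyclic_socle_iff using not_divisible_socle_cyclic[OF CE] by metis
qed

lemma cyclic_socle_mem_cyc:
  assumes socle: "cyclic_socle G p" and g: "g \<in> carrier G"
    and x: "x \<in> carrier G" "ord x dvd ord g"
  shows "x \<in> cyc g"
proof -
  obtain a where a: "a \<in> carrier G" "a [^] p = \<one>" "\<And>v. v \<in> carrier G \<Longrightarrow> v [^] p = \<one> \<Longrightarrow> v \<in> cyc a"
    using socle unfolding cyclic_socle_iff by blast
  obtain k where k: "ord g = p ^ k" using ord_eq_p_power g by blast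
  obtain m where m: "ord x = p ^ m" using ord_eq_p_power x(1) by blast
  have "m \<le> k" using x(2) k m p_gt_1 by (simp add: dvd_power_iff_le)
  with x(1) m show ?thesis
  proof (induction m arbitrary: x)
    case 0
    then show ?case using ord_eq_1 one_mem_cyc by simp
  next
    case (Suc m)
    have "ord (x [^] p) = p ^ m" using Suc.prems p_gt_1 by (simp add: ord_pow)
    then have "x [^] p \<in> cyc g" using Suc by simp
    then obtain i where i: "x [^] p = g [^] (i::int)" by (rule mem_cycE)
    have "(g [^] i) [^] (p ^ m) = \<one>" using Suc.prems pow_eq_id by (simp flip: i add: nat_pow_pow mult.commute)
    moreover have "ord g = p ^ (k - Suc m) * p * p ^ m"
    proof -
      have "p ^ (k - Suc m) * p * p ^ m = p ^ (k - Suc m + 1 + m)" by (simp add: power_add)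
      also have "k - Suc m + 1 + m = k" using Suc.prems(3) by simp
      finally show ?thesis using k by simp
    qed
    ultimately have "g [^] i \<in> cyc (g [^] (p ^ (k - Suc m) * p))"
      using cyc_torsion_mem_cyc_pow[OF g] p_gt_1 by simp
    then obtain t where t: "g [^] i = (g [^] (p ^ (k - Suc m) * p)) [^] (t::int)" by (rule mem_cycE)
    define y where "y = g [^] (int (p ^ (k - Suc m)) * t)"
    have yC: "y \<in> carrier G" "y \<in> cyc g" using g by (simp_all add: y_def)
    have "y [^] p = g [^] (int (p ^ (k - Suc m)) * t * int p)"
      using g by (simp add: y_def int_pow_pow flip: int_pow_int)
    also have "\<dots> = (g [^] (p ^ (k - Suc m) * p)) [^] t"
      using g by (simp add: int_pow_pow ac_simps flip: int_pow_int)
    finally have "y [^] p = x [^] p" using i t by simp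
    then have "(x \<otimes> inv y) [^] p = \<one>"
      using Suc.prems(1) yC by (simp add: nat_pow_distrib nat_pow_inv)
    then have "x \<otimes> inv y \<in> cyc a" using a(3) Suc.prems(1) yC by simp
    moreover have "a \<in> cyc g"
    proof -
      define u where "u = g [^] (p ^ (k - 1))"
      have "k \<noteq> 0" using Suc.prems(3) by simp
      then have "p ^ k = p ^ (k - 1) * p" by (cases k) auto
      then have "ord u = p" unfolding u_def using g k p_gt_1 by (simp add: ord_pow)
      moreover have uC: "u \<in> carrier G" unfolding u_def using g by simp
      ultimately have u: "u \<in> carrier G" "u [^] p = \<one>" "u \<noteq> \<one>"
        using p_gt_1 pow_eq_id[OF uC] ord_eq_1[OF uC] by auto
      have "a \<in> cyc u"
      proof (rule cyc_generator_of_prime_order[OF a(1) _ a(3)[OF u(1,2)] u(3)])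
        have "a \<noteq> \<one>" using a(3)[OF u(1,2)] u(3) by (auto simp: cyc_def)
        then show "Factorial_Ring.prime (ord a)" using ord_eq_p a prime_p by simp
      qed
      then show ?thesis using cyc_subset[of u g] g unfolding u_def by auto
    qed
    ultimately have "x \<otimes> inv y \<in> cyc g" using cyc_subset[of a g] g by blast
    then have "x \<otimes> inv y \<otimes> y \<in> cyc g" using subgroup.m_closed[OF subgroup_cyc[OF g]] yC by blast
    then show ?case using Suc.prems(1) yC by (simp add: m_assoc)
  qed
qed

lemma cyclic_socle_endomorphisms_commute:
  assumes socle: "cyclic_socle G p" and f: "f \<in> hom G G" and g: "g \<in> hom G G"
    and x: "x \<in> carrier G"
  shows "f (g x) = g (f x)"
proof -
  have power: "\<exists>i::int. h x = x [^] i" if h: "h \<in> hom G G" for h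
  proof -
    have hx: "h x \<in> carrier G" using h x by (rule hom_in_carrier)
    have "h x [^] ord x = h (x [^] ord x)" using hom_nat_pow[OF h x is_group is_group] by simp
    also have "\<dots> = \<one>" using x hom_one[OF h is_group is_group] by simp
    finally have "ord (h x) dvd ord x" using pow_eq_id[OF hx] by blast
    then have "h x \<in> cyc x" by (rule cyclic_socle_mem_cyc[OF socle x hx])
    then show ?thesis by (blast elim: mem_cycE)
  qed
  obtain i j where i: "f x = x [^] (i::int)" and j: "g x = x [^] (j::int)" using power f g by blast
  have "f (g x) = x [^] (i * j)"
    using hom_int_pow[OF f x is_group is_group] x by (simp add: i j int_pow_pow)
  moreover have "g (f x) = x [^] (j * i)"
    using hom_int_pow[OF g x is_group is_group] x by (simp add: i j int_pow_pow)
  ultimately show ?thesis by (simp add: mult.commute)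
qed

lemma cyclic_socle_bounded_iso:
  assumes socle: "cyclic_socle G p" and nontrivial: "carrier G \<noteq> {\<one>}"
    and bounded: "\<And>x. x \<in> carrier G \<Longrightarrow> x [^] (p ^ N) = \<one>"
  shows "\<exists>k>0. G \<cong> integer_mod_group (p ^ k)"
proof -
  have "ord ` carrier G \<subseteq> {..p ^ N}"
    using bounded pow_eq_id p_gt_1 by (auto intro: dvd_imp_le)
  then have fin: "finite (ord ` carrier G)" by (rule finite_subset) simp
  have "Max (ord ` carrier G) \<in> ord ` carrier G" using Max_in[OF fin] one_closed by blast
  then obtain g where g: "g \<in> carrier G" "ord g = Max (ord ` carrier G)" by auto
  obtain k where k: "ord g = p ^ k" using ord_eq_p_power g(1) by blast
  have dvd_ord_g: "ord x dvd ord g" if x: "x \<in> carrier G" for x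
  proof -
    obtain i where i: "ord x = p ^ i" using ord_eq_p_power x by blast
    have "p ^ i \<le> p ^ k" using Max_ge[OF fin] x g(2) i k by fastforce
    then show ?thesis using i k p_gt_1 by (simp add: le_imp_power_dvd)
  qed
  have "carrier G \<subseteq> cyc g" using cyclic_socle_mem_cyc[OF socle g(1)] dvd_ord_g by blast
  moreover have "k > 0"
  proof (rule ccontr)
    assume "\<not> k > 0"
    then have "x = \<one>" if "x \<in> carrier G" for x
      using dvd_ord_g[OF that] k ord_eq_1 that by simp
    then show False using nontrivial by blast
  qed
  ultimately show ?thesis using iso_integer_mod_group[OF g(1) _ k] p_gt_1 by auto
qed

lemma cyclic_socle_unbounded_divisible:
  assumes socle: "cyclic_socle G p" and unbounded: "\<And>N. \<exists>x\<in>carrier G. x [^] (p ^ N) \<noteq> \<one>"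
    and y: "y \<in> carrier G"
  shows "\<exists>z\<in>carrier G. z [^] p = y"
proof -
  obtain m where m: "ord y = p ^ m" using ord_eq_p_power y by blast
  obtain h where h: "h \<in> carrier G" "h [^] (p ^ m) \<noteq> \<one>" using unbounded by blast
  obtain j where j: "ord h = p ^ j" using ord_eq_p_power h(1) by blast
  have "\<not> j \<le> m" using h pow_eq_id j le_imp_power_dvd by metis
  then have "ord (h [^] p) = p ^ (j - 1)" using j h(1) p_gt_1
    by (simp add: ord_pow power_diff dvd_power)
  moreover have "p ^ m dvd p ^ (j - 1)" using \<open>\<not> j \<le> m\<close> by (simp add: le_imp_power_dvd)
  ultimately have "y \<in> cyc (h [^] p)" using cyclic_socle_mem_cyc[OF socle _ y] h(1) m by simp
  then obtain i where "y = (h [^] p) [^] (i::int)" by (rule mem_cycE)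
  then have "y = (h [^] i) [^] p" using h(1) by (simp add: int_pow_pow mult.commute flip: int_pow_int)
  then show ?thesis using h(1) by blast
qed

lemma cyclic_socle_unbounded_root_chain:
  assumes socle: "cyclic_socle G p" and unbounded: "\<And>N. \<exists>x\<in>carrier G. x [^] (p ^ N) \<noteq> \<one>"
  obtains c where "\<And>n. c n \<in> carrier G" "\<And>n. c (Suc n) [^] p = c n" "\<And>n. ord (c n) = p ^ Suc n"
    "carrier G \<subseteq> (\<Union>n. cyc (c n))"
proof -
  obtain a where a: "a \<in> carrier G" "a [^] p = \<one>" "\<And>v. v \<in> carrier G \<Longrightarrow> v [^] p = \<one> \<Longrightarrow> v \<in> cyc a"
    using socle unfolding cyclic_socle_iff by blast
  obtain x where "x \<in> carrier G" "x \<noteq> \<one>" using unbounded[of 0] by (metis nat_pow_one power_0)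
  then obtain v where v: "v \<in> carrier G" "v [^] p = \<one>" "v \<noteq> \<one>" by (rule exists_order_p)
  have "a \<noteq> \<one>" using a(3)[OF v(1,2)] v(3) by (auto simp: cyc_def)
  then have "ord a = p" using ord_eq_p a by blast
  obtain c where c: "c 0 = a" "\<And>n. c n \<in> carrier G" "\<And>n. c (Suc n) [^] p = c n"
    using root_chain[OF a(1) cyclic_socle_unbounded_divisible[OF socle unbounded]] by blast
  have ord_c: "ord (c n) = p ^ Suc n" for n
    using ord_root_chain[of c, OF c(2,3)] c(1) \<open>ord a = p\<close> by simp
  have "carrier G \<subseteq> (\<Union>n. cyc (c n))"
  proof
    fix x assume x: "x \<in> carrier G"
    obtain m where "ord x = p ^ m" using ord_eq_p_power x by blast
    then have "x \<in> cyc (c m)"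
      using cyclic_socle_mem_cyc[OF socle c(2) x] ord_c by (simp add: le_imp_power_dvd)
    then show "x \<in> (\<Union>n. cyc (c n))" by blast
  qed
  then show ?thesis using that c(2,3) ord_c by blast
qed

end

lemma cyclic_socle_iso:
  assumes G: "group G" and H: "group H" and iso: "G \<cong> H" and socle: "cyclic_socle H p"
  shows "cyclic_socle G p"
proof -
  interpret G: group G by (rule G)
  interpret H: group H by (rule H)
  obtain \<phi> where \<phi>: "\<phi> \<in> iso H G" using G.iso_sym[OF iso] unfolding is_iso_def by blast
  interpret \<phi>: group_hom H G \<phi> using \<phi> by (unfold_locales) (simp add: iso_def)
  have bij: "bij_betw \<phi> (carrier H) (carrier G)" using \<phi> by (simp add: iso_def)
  obtain a where a: "a \<in> carrier H" "a [^]\<^bsub>H\<^esub> p = \<one>\<^bsub>H\<^esub>"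
    and gen: "\<And>w. w \<in> carrier H \<Longrightarrow> w [^]\<^bsub>H\<^esub> p = \<one>\<^bsub>H\<^esub> \<Longrightarrow> \<exists>i::int. w = a [^]\<^bsub>H\<^esub> i"
    using socle unfolding cyclic_socle_def by blast
  have "\<exists>i::int. v = \<phi> a [^]\<^bsub>G\<^esub> i" if v: "v \<in> carrier G" "v [^]\<^bsub>G\<^esub> p = \<one>\<^bsub>G\<^esub>" for v
  proof -
    obtain w where w: "w \<in> carrier H" "v = \<phi> w" using v(1) bij by (auto simp: bij_betw_def)
    have eq: "\<phi> (w [^]\<^bsub>H\<^esub> p) = \<phi> \<one>\<^bsub>H\<^esub>" using v(2) w by (simp add: \<phi>.hom_nat_pow)
    have "inj_on \<phi> (carrier H)" using bij by (simp add: bij_betw_def)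
    from inj_onD[OF this eq] have "w [^]\<^bsub>H\<^esub> p = \<one>\<^bsub>H\<^esub>" using w(1) by simp
    then obtain i where "w = a [^]\<^bsub>H\<^esub> (i::int)" using gen w(1) by blast
    then show ?thesis using w(2) a(1) \<phi>.hom_int_pow by blast
  qed
  moreover have "\<phi> a \<in> carrier G" "\<phi> a [^]\<^bsub>G\<^esub> p = \<one>\<^bsub>G\<^esub>" using a by (simp_all flip: \<phi>.hom_nat_pow)
  ultimately show ?thesis unfolding cyclic_socle_def by blast
qed

section \<open>The groups \<open>Z\<^sub>p\<^sub>^\<^sub>k\<close> and \<open>Z\<^sub>p\<^sub>^\<^sub>\<infinity>\<close>\<close>

lemma cis_power: "cis (2 * pi / real n) ^ k = cis (2 * pi * real k / real n)"
  by (simp add: DeMoivre mult.commute)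

lemma root_of_unity_eq_cis_power:
  assumes "n > 0" "z ^ n = 1"
  shows "\<exists>k. z = cis (2 * pi / real n) ^ k"
  using bij_betw_roots_unity[OF assms(1)] assms(2) unfolding bij_betw_def cis_power by auto

lemma cis_power_eq_1:
  assumes "k < n" "cis (2 * pi / real n) ^ k = 1"
  shows "k = 0"
proof -
  have "n > 0" using assms(1) by simp
  then have "inj_on (\<lambda>k. cis (2 * pi * real k / real n)) {..<n}"
    using bij_betw_roots_unity unfolding bij_betw_def by blast
  from inj_onD[OF this, of k 0] show ?thesis using assms \<open>n > 0\<close> unfolding cis_power by simp
qed

lemma pruefer_group_pow [simp]: "x [^]\<^bsub>pruefer_group p\<^esub> (n::nat) = x ^ n"
  by (induction n) (simp_all add: pruefer_group_def)

lemma pruefer_group_one [simp]: "\<one>\<^bsub>pruefer_group p\<^esub> = 1"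
  and carrier_pruefer_group: "carrier (pruefer_group p) = {z. \<exists>n. z ^ (p ^ n) = 1}"
  by (simp_all add: pruefer_group_def)

lemma comm_group_pruefer_group:
  assumes "p > 0" shows "comm_group (pruefer_group p)"
proof (rule comm_groupI)
  fix x y assume "x \<in> carrier (pruefer_group p)" "y \<in> carrier (pruefer_group p)"
  then obtain a b where a: "x ^ (p ^ a) = 1" and b: "y ^ (p ^ b) = 1"
    by (auto simp: carrier_pruefer_group)
  have "(x * y) ^ (p ^ (a + b)) = (x ^ (p ^ a)) ^ (p ^ b) * (y ^ (p ^ b)) ^ (p ^ a)"
    by (simp add: power_mult_distrib power_add mult.commute flip: power_mult)
  then show "x \<otimes>\<^bsub>pruefer_group p\<^esub> y \<in> carrier (pruefer_group p)"
    using a b by (auto simp: carrier_pruefer_group pruefer_group_def)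
next
  fix x assume "x \<in> carrier (pruefer_group p)"
  then obtain a where a: "x ^ (p ^ a) = 1" by (auto simp: carrier_pruefer_group)
  then have "x \<noteq> 0" using assms by (auto simp: power_0_left)
  moreover have "inverse x ^ (p ^ a) = 1" using a by (simp add: power_inverse)
  ultimately show "\<exists>y\<in>carrier (pruefer_group p). y \<otimes>\<^bsub>pruefer_group p\<^esub> x = \<one>\<^bsub>pruefer_group p\<^esub>"
    by (intro bexI[of _ "inverse x"]) (auto simp: carrier_pruefer_group pruefer_group_def)
qed (auto simp: pruefer_group_def mult.commute mult.assoc intro: exI[of _ 0])

lemma group_pruefer_group: "p > 0 \<Longrightarrow> group (pruefer_group p)"
  using comm_group.axioms(2)[OF comm_group_pruefer_group] .

lemma pruefer_root_chain:
  assumes p: "p > 1"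
  defines "\<omega> n \<equiv> cis (2 * pi / real (p ^ Suc n))"
  shows "\<omega> n \<in> carrier (pruefer_group p)"
    and "\<omega> (Suc n) [^]\<^bsub>pruefer_group p\<^esub> p = \<omega> n"
    and "group.ord (pruefer_group p) (\<omega> n) = p ^ Suc n"
    and "carrier (pruefer_group p) \<subseteq> (\<Union>n. group.cyc (pruefer_group p) (\<omega> n))"
proof -
  interpret P: comm_group "pruefer_group p" using comm_group_pruefer_group p by simp
  have unit: "\<omega> n ^ (p ^ Suc n) = 1" for n
    unfolding \<omega>_def cis_power using p by simp
  then show \<omega>: "\<omega> n \<in> carrier (pruefer_group p)" for n
    unfolding carrier_pruefer_group by blast
  show "\<omega> (Suc n) [^]\<^bsub>pruefer_group p\<^esub> p = \<omega> n"
    unfolding \<omega>_def pruefer_group_pow cis_power using p by (simp add: field_simps)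
  show "P.ord (\<omega> n) = p ^ Suc n"
  proof -
    have "P.ord (\<omega> n) dvd p ^ Suc n" using P.pow_eq_id[OF \<omega>] unit by simp
    moreover have "P.ord (\<omega> n) > 0" using calculation p by (auto intro: Nat.gr0I)
    moreover have "\<omega> n ^ P.ord (\<omega> n) = 1" using P.pow_ord_eq_1[OF \<omega>] by simp
    ultimately show ?thesis
      using cis_power_eq_1[of "P.ord (\<omega> n)" "p ^ Suc n"] p
      by (metis \<omega>_def dvd_imp_le le_neq_implies_less less_not_refl2 zero_less_power zero_less_one
          less_trans)
  qed
  show "carrier (pruefer_group p) \<subseteq> (\<Union>n. P.cyc (\<omega> n))"
  proof
    fix z assume "z \<in> carrier (pruefer_group p)"
    then obtain n where "z ^ (p ^ n) = 1" by (auto simp: carrier_pruefer_group)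
    then have "z ^ (p ^ Suc n) = 1" by (metis power_Suc2 power_mult power_one)
    then obtain k where "z = \<omega> n ^ k"
      unfolding \<omega>_def using root_of_unity_eq_cis_power p by (metis of_nat_power zero_less_power
          gr_implies_not0 neq0_conv)
    then have "z \<in> P.cyc (\<omega> n)" using P.nat_pow_mem_cyc[of "\<omega> n" k] by simp
    then show "z \<in> (\<Union>n. P.cyc (\<omega> n))" by blast
  qed
qed

lemma cyclic_socle_pruefer_group:
  assumes p: "p > 1" shows "cyclic_socle (pruefer_group p) p"
proof -
  interpret P: comm_group "pruefer_group p" using comm_group_pruefer_group p by simp
  define a where "a = cis (2 * pi / real p)"
  have "a ^ p = 1" unfolding a_def cis_power using p by simp
  then have "a \<in> carrier (pruefer_group p)"
    unfolding carrier_pruefer_group by (intro CollectI exI[of _ 1]) simp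
  moreover have "\<exists>i::int. v = a [^]\<^bsub>pruefer_group p\<^esub> i" if v: "v ^ p = 1" for v
  proof -
    obtain k where "v = a ^ k" using root_of_unity_eq_cis_power[OF _ v] p unfolding a_def by auto
    then have "v = a [^]\<^bsub>pruefer_group p\<^esub> int k" by (simp add: int_pow_int)
    then show ?thesis by blast
  qed
  ultimately show ?thesis unfolding cyclic_socle_def using \<open>a ^ p = 1\<close> by auto
qed

lemma cyclic_socle_integer_mod_group:
  assumes p: "p > 1" and k: "k > 0"
  shows "cyclic_socle (integer_mod_group (p ^ k)) p"
proof -
  define a where "a = int (p ^ (k - 1))"
  have pk: "p ^ k = p * p ^ (k - 1)" using k by (simp flip: power_Suc)
  have "a \<in> carrier (integer_mod_group (p ^ k))"
    using p pk by (simp add: a_def carrier_integer_mod_group)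
  moreover have "a [^]\<^bsub>integer_mod_group (p ^ k)\<^esub> p = 0" by (simp add: a_def pk)
  moreover have "\<exists>i::int. v = a [^]\<^bsub>integer_mod_group (p ^ k)\<^esub> i"
    if v: "v \<in> carrier (integer_mod_group (p ^ k))" "v [^]\<^bsub>integer_mod_group (p ^ k)\<^esub> p = 0" for v
  proof -
    have range: "0 \<le> v" "v < int (p ^ k)" using v(1) p by (auto simp: carrier_integer_mod_group)
    have "int p * a dvd int p * v" using v(2) pk by (simp add: a_def mod_eq_0_iff_dvd)
    then have "a dvd v" using p by simp
    then obtain t where "v = a * t" by (rule dvdE)
    then have "v = a [^]\<^bsub>integer_mod_group (p ^ k)\<^esub> t"
      using range by (simp add: int_pow_integer_mod_group mult.commute)
    then show ?thesis by blast
  qed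
  ultimately show ?thesis unfolding cyclic_socle_def one_integer_mod_group by blast
qed

context p_primary_group
begin

lemma cyclic_socle_iff_iso:
  assumes nontrivial: "carrier G \<noteq> {\<one>}"
  shows "cyclic_socle G p \<longleftrightarrow> (\<exists>k>0. G \<cong> integer_mod_group (p ^ k)) \<or> G \<cong> pruefer_group p"
proof
  assume socle: "cyclic_socle G p"
  show "(\<exists>k>0. G \<cong> integer_mod_group (p ^ k)) \<or> G \<cong> pruefer_group p"
  proof (cases "\<exists>N. \<forall>x\<in>carrier G. x [^] (p ^ N) = \<one>")
    case True
    then obtain N where "\<And>x. x \<in> carrier G \<Longrightarrow> x [^] (p ^ N) = \<one>" by blast
    then show ?thesis using cyclic_socle_bounded_iso[OF socle nontrivial] by blast
  next
    case False
    then have "\<exists>x\<in>carrier G. x [^] (p ^ N) \<noteq> \<one>" for N by blast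
    then obtain c where c: "\<And>n. c n \<in> carrier G" "\<And>n. c (Suc n) [^] p = c n"
      "\<And>n. ord (c n) = p ^ Suc n" "carrier G \<subseteq> (\<Union>n. cyc (c n))"
      using cyclic_socle_unbounded_root_chain[OF socle] by blast
    have "group (pruefer_group p)" using group_pruefer_group p_gt_1 by simp
    then have "G \<cong> pruefer_group p"
      by (rule root_chain_iso[where d = "\<lambda>n. cis (2 * pi / real (p ^ Suc n))", OF is_group _ c
            pruefer_root_chain[OF p_gt_1]])
    then show ?thesis by blast
  qed
next
  assume "(\<exists>k>0. G \<cong> integer_mod_group (p ^ k)) \<or> G \<cong> pruefer_group p"
  then show "cyclic_socle G p"
  proof
    assume "\<exists>k>0. G \<cong> integer_mod_group (p ^ k)"
    then obtain k where "k > 0" "G \<cong> integer_mod_group (p ^ k)" by blast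
    then show ?thesis
      by (intro cyclic_socle_iso[OF is_group group_integer_mod_group _
            cyclic_socle_integer_mod_group[OF p_gt_1]])
  next
    have "group (pruefer_group p)" using group_pruefer_group p_gt_1 by simp
    moreover assume "G \<cong> pruefer_group p"
    ultimately show ?thesis
      using cyclic_socle_iso[OF is_group _ _ cyclic_socle_pruefer_group[OF p_gt_1]] by blast
  qed
qed

end

theorem lemma2p3:
  fixes p :: nat and G :: "('a, 'b) monoid_scheme"
  assumes "Factorial_Ring.prime p"
    and "comm_group G"
    and "carrier G \<noteq> {\<one>\<^bsub>G\<^esub>}"
    and "\<forall>x \<in> carrier G. \<exists>n::nat. x [^]\<^bsub>G\<^esub> (p ^ n) = \<one>\<^bsub>G\<^esub>"
  shows "centrally_essential (End_ring G) \<longleftrightarrow>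
           ((\<exists>k::nat. k > 0 \<and> G \<cong> integer_mod_group (p ^ k)) \<or> G \<cong> pruefer_group p)"
proof -
  interpret p_primary_group G p
    using assms(1,2,4) by (simp add: p_primary_group_def p_primary_group_axioms_def)
  have "centrally_essential (End_ring G) \<longleftrightarrow> cyclic_socle G p"
    using centrally_essential_imp_cyclic_socle[OF _ assms(3)]
      End_ring_centrally_essential_if_commute cyclic_socle_endomorphisms_commute by blast
  also have "\<dots> \<longleftrightarrow> (\<exists>k>0. G \<cong> integer_mod_group (p ^ k)) \<or> G \<cong> pruefer_group p"
    by (rule cyclic_socle_iff_iso[OF assms(3)])
  finally show ?thesis .
qed

end
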